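(* Let $a,b,c$ be positive integers, $R = \mathbb{Z}[x,y,z]/(x^{a+b},y^{a+c},z^{b+c})$, and $m = a+b+c-2$. Let $B_r$ be the set of monomials $x^iy^jz^k$ with $i<a+b$, $j<a+c$, $k<b+c$ and $i+j+k=r$ (the monomial $\mathbb{Z}$-basis of the degree-$r$ component $R_r$), and let $U_m: R_m \to R_{m+1}$ be multiplication by $x+y+z$, expressed as a matrix in the monomial bases $B_m$, $B_{m+1}$ (this is a square $0$-$1$ matrix). Then $\det(U_m) = \pm \operatorname{perm}(U_m)$, and the nonzero terms of the permanent $\operatorname{perm}(U_m)=\sum_{\varphi}\prod_{\lambda\in B_m}(U_m)_{\varphi(\lambda),\lambda}$ (sum over bijections $\varphi: B_m\to B_{m+1}$; a term is nonzero iff $\varphi(\lambda)/\lambda\in\{x,y,z\}$ for all $\lambda$) are in natural bijection with the plane partitions that fit in an $a\times b\times c$ box. In particular $|\det(U_m)|$ equals the number of plane partitions fitting in an $a\times b\times c$ box.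
   Context: A plane partition is a finite two-dimensional array of positive integers, weakly decreasing from left to right along rows and from top to bottom along columns. It fits in an $a\times b\times c$ box if it has at most $a$ rows, at most $b$ columns, and each entry is at most $c$. *)

theory Defs
  imports "Jordan_Normal_Form.Determinant" "HOL-Library.Product_Lexorder"
begin

text \<open>Monomials x^i y^j z^k of R = Z[x,y,z]/(x^(a+b), y^(a+c), z^(b+c)) are encoded
  by exponent triples (i,j,k).\<close>

type_synonym monom = "nat \<times> nat \<times> nat"

definition basis_B :: "nat \<Rightarrow> nat \<Rightarrow> nat \<Rightarrow> nat \<Rightarrow> monom set" where
  "basis_B a b c r = {(i,j,k). i < a + b \<and> j < a + c \<and> k < b + c \<and> i + j + k = r}"

definition step_monom :: "monom \<Rightarrow> monom \<Rightarrow> bool" where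
  "step_monom mu lam = (case lam of (i,j,k) \<Rightarrow>
      mu = (i+1,j,k) \<or> mu = (i,j+1,k) \<or> mu = (i,j,k+1))"

text \<open>Entry (mu, lambda) of multiplication by x+y+z: the coefficient of the
  basis monomial mu in (x+y+z)*lambda.\<close>
definition U_entry :: "monom \<Rightarrow> monom \<Rightarrow> int" where
  "U_entry mu lam = (if step_monom mu lam then 1 else 0)"

definition U_mat :: "nat \<Rightarrow> nat \<Rightarrow> nat \<Rightarrow> int mat" where
  "U_mat a b c =
     (let m = a + b + c - 2;
          rows = sorted_list_of_set (basis_B a b c (m+1));
          cols = sorted_list_of_set (basis_B a b c m)
      in mat (length rows) (length cols) (\<lambda>(p,q). U_entry (rows ! p) (cols ! q)))"

definition U_perm :: "nat \<Rightarrow> nat \<Rightarrow> nat \<Rightarrow> int" where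
  "U_perm a b c =
     (let m = a + b + c - 2 in
      \<Sum>phi \<in> {phi. bij_betw phi (basis_B a b c m) (basis_B a b c (m+1))
                    \<and> (\<forall>x. x \<notin> basis_B a b c m \<longrightarrow> phi x = undefined)}.
         \<Prod>lam \<in> basis_B a b c m. U_entry (phi lam) lam)"

text \<open>Plane partitions, as arrays padded with zeros (entry 0 = no cell).\<close>
definition plane_partition :: "(nat \<Rightarrow> nat \<Rightarrow> nat) \<Rightarrow> bool" where
  "plane_partition p =
     (finite {(i,j). p i j \<noteq> 0} \<and>
      (\<forall>i j. p (Suc i) j \<le> p i j) \<and> (\<forall>i j. p i (Suc j) \<le> p i j))"

definition fits_in_box :: "nat \<Rightarrow> nat \<Rightarrow> nat \<Rightarrow> (nat \<Rightarrow> nat \<Rightarrow> nat) \<Rightarrow> bool" where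
  "fits_in_box a b c p =
     ((\<forall>i j. p i j \<noteq> 0 \<longrightarrow> i < a \<and> j < b) \<and> (\<forall>i j. p i j \<le> c))"

definition box_PP :: "nat \<Rightarrow> nat \<Rightarrow> nat \<Rightarrow> (nat \<Rightarrow> nat \<Rightarrow> nat) set" where
  "box_PP a b c = {p. plane_partition p \<and> fits_in_box a b c p}"

end

theory Submission
  imports Defs
begin

text \<open>A nonzero term of the permanent is a matching \<open>\<phi>\<close> that sends each monomial \<open>\<lambda>\<close> of
  degree \<open>m\<close> to one of \<open>x\<lambda>, y\<lambda>, z\<lambda>\<close>. Such a matching is determined by the set \<open>X\<close> of
  monomials it multiplies by \<open>x\<close>, and counting along the layers of fixed \<open>x\<close>-degree shows
  that the number of elements of \<open>X\<close> in each layer is forced. Listing, for each layer, how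
  many elements of \<open>X\<close> have \<open>y\<close>-degree at least \<open>J\<close>, the interlacing inequalities between
  neighbouring layers become the monotonicity of a plane partition in an \<open>a \<times> b \<times> c\<close> box,
  and every plane partition arises from exactly one matching: the one multiplying by \<open>x\<close>,
  \<open>y\<close>, \<open>z\<close> the monomials under the top, side and front faces of its stacks of cubes.

  For the signs, order both monomial bases lexicographically. The inversions of a matching
  can be counted layer by layer, and the count depends only on \<open>a, b, c\<close>, so all nonzero
  terms of the determinant have the same sign.\<close>

definition deg_x :: "monom \<Rightarrow> nat" where "deg_x l = fst l"
definition deg_y :: "monom \<Rightarrow> nat" where "deg_y l = fst (snd l)"
definition deg_z :: "monom \<Rightarrow> nat" where "deg_z l = snd (snd l)"

lemma deg_simps [simp]: "deg_x (i, j, k) = i" "deg_y (i, j, k) = j" "deg_z (i, j, k) = k"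
  by (simp_all add: deg_x_def deg_y_def deg_z_def)

definition times_x :: "monom \<Rightarrow> monom" where "times_x l = (deg_x l + 1, deg_y l, deg_z l)"
definition times_y :: "monom \<Rightarrow> monom" where "times_y l = (deg_x l, deg_y l + 1, deg_z l)"
definition times_z :: "monom \<Rightarrow> monom" where "times_z l = (deg_x l, deg_y l, deg_z l + 1)"

lemma times_distinct [simp]:
  "times_x l \<noteq> times_y l" "times_x l \<noteq> times_z l" "times_y l \<noteq> times_z l"
  "times_y l \<noteq> times_x l" "times_z l \<noteq> times_x l" "times_z l \<noteq> times_y l"
  by (simp_all add: times_x_def times_y_def times_z_def)

lemma times_eq_iff [simp]:
  "times_x l = times_x l' \<longleftrightarrow> l = l'" "times_y l = times_y l' \<longleftrightarrow> l = l'"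
  "times_z l = times_z l' \<longleftrightarrow> l = l'"
  by (cases l, cases l', simp add: times_x_def times_y_def times_z_def)+

lemma step_monom_iff: "step_monom mu l \<longleftrightarrow> mu = times_x l \<or> mu = times_y l \<or> mu = times_z l"
  by (cases l) (auto simp: step_monom_def times_x_def times_y_def times_z_def)

lemma prod_U_entry_eq:
  "finite A \<Longrightarrow> (\<Prod>l\<in>A. U_entry (f l) l) = (if \<forall>l\<in>A. step_monom (f l) l then 1 else 0)"
  by (auto simp: U_entry_def intro: prod.neutral prod_zero)

lemma mem_basis_B_iff:
  "l \<in> basis_B a b c r \<longleftrightarrow>
     deg_x l < a + b \<and> deg_y l < a + c \<and> deg_z l < b + c \<and> deg_x l + deg_y l + deg_z l = r"
  by (cases l) (auto simp: basis_B_def)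

lemma finite_basis_B [simp]: "finite (basis_B a b c r)"
proof -
  have "basis_B a b c r \<subseteq> {..<a+b} \<times> {..<a+c} \<times> {..<b+c}"
    by (auto simp: basis_B_def)
  then show ?thesis by (rule finite_subset) auto
qed

lemma step_inversion_iff:
  assumes "deg_x l + deg_y l + deg_z l = deg_x l' + deg_y l' + deg_z l'"
    and "step_monom mu l" and "step_monom mu' l'"
  shows "l < l' \<and> mu' < mu \<longleftrightarrow>
     mu = times_x l \<and> mu' \<noteq> times_x l' \<and>
       (deg_x l = deg_x l' \<and> deg_y l < deg_y l' \<or> deg_x l + 1 = deg_x l' \<and> deg_y mu' < deg_y l)"
  using assms by (cases l, cases l') (auto simp: step_monom_def times_x_def)

lemma downward_closed_eq_lessThan:
  assumes "finite (S::nat set)" and "\<And>x y. x \<in> S \<Longrightarrow> y \<le> x \<Longrightarrow> y \<in> S"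
  shows "S = {..<card S}"
proof -
  have "S \<subseteq> {..<card S}"
  proof
    fix x assume x: "x \<in> S"
    have "{..x} \<subseteq> S" using assms(2) x by auto
    then have "card {..x} \<le> card S" using assms(1) by (rule card_mono[rotated])
    then show "x \<in> {..<card S}" by simp
  qed
  then show ?thesis by (metis card_lessThan card_subset_eq finite_lessThan)
qed

lemma sorted_list_of_set_nth_less_iff:
  assumes "finite S" "k < card S" "k' < card S"
  shows "sorted_list_of_set S ! k < sorted_list_of_set S ! k' \<longleftrightarrow> k < k'"
  using assms sorted_wrt_nth_less[OF strict_sorted_list_of_set, of _ _ S]
  by (metis length_sorted_list_of_set linorder_neqE_nat order.asym order.irrefl)

lemma sum_card_below_in_classes:
  fixes g :: "'a \<Rightarrow> 'b::linorder"
  assumes "finite S"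
    and g_inj: "\<And>s s'. s \<in> S \<Longrightarrow> s' \<in> S \<Longrightarrow> \<kappa> s = \<kappa> s' \<Longrightarrow> g s = g s' \<Longrightarrow> s = s'"
  shows "2 * (\<Sum>s\<in>S. card {s'\<in>S. \<kappa> s' = \<kappa> s \<and> g s' < g s})
      = (\<Sum>s\<in>S. card {s'\<in>S. \<kappa> s' = \<kappa> s} - 1)"
    and "2 * (\<Sum>s\<in>S. card {s'\<in>S. \<kappa> s' = \<kappa> s \<and> g s < g s'})
      = (\<Sum>s\<in>S. card {s'\<in>S. \<kappa> s' = \<kappa> s} - 1)"
proof -
  define below where "below s = {s'\<in>S. \<kappa> s' = \<kappa> s \<and> g s' < g s}" for s
  define above where "above s = {s'\<in>S. \<kappa> s' = \<kappa> s \<and> g s < g s'}" for s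
  have "(SIGMA s:S. above s) = (\<lambda>(s, s'). (s', s)) ` (SIGMA s:S. below s)"
    by (auto simp: below_def above_def image_iff)
  moreover have "inj_on (\<lambda>(s, s'). (s', s)) (SIGMA s:S. below s)"
    by (rule inj_onI) auto
  ultimately have "card (SIGMA s:S. above s) = card (SIGMA s:S. below s)"
    by (simp add: card_image)
  then have sym: "(\<Sum>s\<in>S. card (above s)) = (\<Sum>s\<in>S. card (below s))"
    using \<open>finite S\<close> by (simp add: card_SigmaI below_def above_def)
  have "card (below s) + card (above s) = card {s'\<in>S. \<kappa> s' = \<kappa> s} - 1" if "s \<in> S" for s
  proof -
    have "{s'\<in>S. \<kappa> s' = \<kappa> s} - {s} = below s \<union> above s"
      using g_inj that by (auto simp: below_def above_def) (metis not_less_iff_gr_or_eq)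
    moreover have "below s \<inter> above s = {}" by (auto simp: below_def above_def)
    moreover have "finite (below s)" "finite (above s)"
      using \<open>finite S\<close> by (simp_all add: below_def above_def)
    ultimately have "card (below s) + card (above s) = card ({s'\<in>S. \<kappa> s' = \<kappa> s} - {s})"
      by (simp add: card_Un_disjoint)
    then show ?thesis using that by simp
  qed
  then have "(\<Sum>s\<in>S. card (below s)) + (\<Sum>s\<in>S. card (above s))
      = (\<Sum>s\<in>S. card {s'\<in>S. \<kappa> s' = \<kappa> s} - 1)"
    by (simp add: sum.distrib[symmetric])
  with sym
  show "2 * (\<Sum>s\<in>S. card {s'\<in>S. \<kappa> s' = \<kappa> s \<and> g s' < g s})
      = (\<Sum>s\<in>S. card {s'\<in>S. \<kappa> s' = \<kappa> s} - 1)"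
    and "2 * (\<Sum>s\<in>S. card {s'\<in>S. \<kappa> s' = \<kappa> s \<and> g s < g s'})
      = (\<Sum>s\<in>S. card {s'\<in>S. \<kappa> s' = \<kappa> s} - 1)"
    unfolding below_def above_def by simp_all
qed

section \<open>The sign of a permutation by counting inversions\<close>

definition perm_inversions :: "(nat \<Rightarrow> nat) \<Rightarrow> nat \<Rightarrow> (nat \<times> nat) set" where
  "perm_inversions p n = {(x, y). x < y \<and> y < n \<and> p y < p x}"

lemma finite_perm_inversions [simp]: "finite (perm_inversions p n)"
  by (rule finite_subset[of _ "{..<n} \<times> {..<n}"]) (auto simp: perm_inversions_def)

lemma permutes_without_inversions_eq_id:
  assumes p: "p permutes {..<n}" and "perm_inversions p n = {}"
  shows "p = id"
proof -
  have "p x < p y" if "x < y" "y < n" for x y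
  proof -
    have "\<not> p y < p x" using assms(2) that by (auto simp: perm_inversions_def)
    moreover have "p x \<noteq> p y" using permutes_inj[OF p] that by (metis inj_eq less_irrefl)
    ultimately show ?thesis by simp
  qed
  then have "sorted_wrt (<) (map p [0..<n])" by (auto simp: sorted_wrt_iff_nth_less)
  moreover have "set (map p [0..<n]) = set [0..<n]"
    using permutes_image[OF p] by (simp add: atLeast0LessThan)
  ultimately have "map p [0..<n] = [0..<n]" by (intro strict_sorted_equal) auto
  then have "p x = x" if "x < n" for x
    using that nth_map_upt[of x n 0 p] by simp
  then show ?thesis using permutes_not_in[OF p] by (metis eq_id_iff lessThan_iff)
qed

lemma card_perm_inversions_descent:
  assumes p: "p permutes {..<n}" and i: "Suc i < n" "p (Suc i) < p i"
  shows "card (perm_inversions p n) = Suc (card (perm_inversions (p \<circ> transpose i (Suc i)) n))"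
proof -
  define t where "t = transpose i (Suc i)"
  define q where "q = p \<circ> t"
  have t_perm: "t permutes {..<n}" unfolding t_def using i by (intro permutes_swap_id) auto
  have tt: "t (t z) = z" for z by (simp add: t_def)
  have t_less: "z < n \<Longrightarrow> t z < n" for z using permutes_in_image[OF t_perm, of z] by simp
  have t_order: "x < y \<Longrightarrow> (x, y) \<noteq> (i, Suc i) \<Longrightarrow> t x < t y" for x y
    by (auto simp: t_def transpose_def)
  let ?h = "\<lambda>(x, y). (t x, t y)"
  have not_inv: "(i, Suc i) \<notin> perm_inversions q n"
    using i by (simp add: perm_inversions_def q_def t_def)
  have inv_t: "(t x, t y) \<in> perm_inversions p n"
    if "(x, y) \<in> perm_inversions q n" for x y
  proof -
    have "x < y" "y < n" "p (t y) < p (t x)" using that by (auto simp: perm_inversions_def q_def)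
    moreover have "(x, y) \<noteq> (i, Suc i)" using that not_inv by auto
    ultimately show ?thesis using t_order t_less by (auto simp: perm_inversions_def)
  qed
  have "perm_inversions p n \<subseteq> ?h ` perm_inversions q n \<union> {(i, Suc i)}"
  proof
    fix z assume z: "z \<in> perm_inversions p n"
    obtain x y where xy: "z = (x, y)" by (cases z)
    show "z \<in> ?h ` perm_inversions q n \<union> {(i, Suc i)}"
    proof (cases "(x, y) = (i, Suc i)")
      case False
      have "x < y" "y < n" "p y < p x" using z xy by (auto simp: perm_inversions_def)
      then have "(t x, t y) \<in> perm_inversions q n"
        using t_order[OF _ False] t_less tt by (auto simp: perm_inversions_def q_def)
      moreover have "z = ?h (t x, t y)" using xy tt by simp
      ultimately show ?thesis by blast
    qed (use xy in simp)
  qed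
  moreover have "?h ` perm_inversions q n \<union> {(i, Suc i)} \<subseteq> perm_inversions p n"
    using inv_t i by (auto simp: perm_inversions_def)
  ultimately have split: "perm_inversions p n = ?h ` perm_inversions q n \<union> {(i, Suc i)}" by blast
  have "inj_on ?h (perm_inversions q n)"
    by (rule inj_onI) (clarsimp, metis tt)
  moreover have "(i, Suc i) \<notin> ?h ` perm_inversions q n"
  proof
    assume "(i, Suc i) \<in> ?h ` perm_inversions q n"
    then obtain x y where "(x, y) \<in> perm_inversions q n" "(t x, t y) = (i, Suc i)" by auto
    then show False
      using tt by (auto simp: t_def transpose_def perm_inversions_def split: if_splits)
  qed
  ultimately show ?thesis
    unfolding split q_def[symmetric] t_def[symmetric] by (simp add: card_image)
qed

lemma sign_eq_perm_inversions:
  assumes "p permutes {..<n}"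
  shows "sign p = (-1) ^ card (perm_inversions p n)"
  using assms
proof (induction "card (perm_inversions p n)" arbitrary: p rule: less_induct)
  case less
  show ?case
  proof (cases "perm_inversions p n = {}")
    case True
    then show ?thesis using permutes_without_inversions_eq_id[OF less.prems] by simp
  next
    case False
    then obtain x y where xy: "x < y" "y < n" "p y < p x" by (auto simp: perm_inversions_def)
    have "\<exists>i. Suc i < n \<and> p (Suc i) < p i"
    proof (rule ccontr)
      assume "\<nexists>i. Suc i < n \<and> p (Suc i) < p i"
      then have ascent: "p j \<le> p (Suc j)" if "Suc j < n" for j using that by (meson not_le)
      have "p x \<le> p (x + d)" if "x + d < n" for d
        using that by (induction d) (auto intro: order.trans ascent)
      from this[of "y - x"] xy show False by simp
    qed
    then obtain i where i: "Suc i < n" "p (Suc i) < p i" by blast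
    define t where "t = transpose i (Suc i)"
    have t_perm: "t permutes {..<n}" unfolding t_def using i by (intro permutes_swap_id) auto
    have pt_perm: "p \<circ> t permutes {..<n}" using t_perm less.prems by (rule permutes_compose)
    have "sign (p \<circ> t) = sign p * sign t"
      using less.prems t_perm by (intro sign_compose) (auto intro: permutes_imp_permutation)
    moreover have "sign t = -1" by (simp add: t_def sign_swap_id)
    moreover have "card (perm_inversions p n) = Suc (card (perm_inversions (p \<circ> t) n))"
      unfolding t_def by (rule card_perm_inversions_descent[OF less.prems i])
    ultimately show ?thesis using less.hyps[OF _ pt_perm] by simp
  qed
qed

locale box =
  fixes a b c :: nat
  assumes a_pos: "0 < a" and b_pos: "0 < b" and c_pos: "0 < c"
begin

definition "m = a + b + c - 2"
definition "Bm = basis_B a b c m"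
definition "Bm1 = basis_B a b c (m + 1)"

lemma mem_Bm_iff:
  "l \<in> Bm \<longleftrightarrow>
     deg_x l < a + b \<and> deg_y l < a + c \<and> deg_z l < b + c \<and>
     deg_x l + deg_y l + deg_z l = a + b + c - 2"
  unfolding Bm_def m_def mem_basis_B_iff ..

lemma mem_Bm1_iff:
  "l \<in> Bm1 \<longleftrightarrow>
     deg_x l < a + b \<and> deg_y l < a + c \<and> deg_z l < b + c \<and>
     deg_x l + deg_y l + deg_z l = a + b + c - 1"
  unfolding Bm1_def m_def mem_basis_B_iff using a_pos b_pos c_pos by auto

lemma finite_Bm [simp]: "finite Bm" and finite_Bm1 [simp]: "finite Bm1"
  by (simp_all add: Bm_def Bm1_def)

text \<open>Division of the socle monomial \<open>x^(a+b-1) y^(a+c-1) z^(b+c-1)\<close> exchanges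
  degrees \<open>m\<close> and \<open>m + 1\<close>.\<close>

definition complement :: "monom \<Rightarrow> monom" where
  "complement l = (a + b - 1 - deg_x l, a + c - 1 - deg_y l, b + c - 1 - deg_z l)"

lemma card_Bm_eq_card_Bm1: "card Bm = card Bm1"
proof -
  have "bij_betw complement Bm Bm1"
  proof (rule bij_betw_byWitness[where f' = complement])
    show "\<forall>l\<in>Bm. complement (complement l) = l" "\<forall>l\<in>Bm1. complement (complement l) = l"
      by (auto simp: mem_Bm_iff mem_Bm1_iff complement_def)
    show "complement ` Bm \<subseteq> Bm1" "complement ` Bm1 \<subseteq> Bm"
      using a_pos b_pos c_pos by (auto simp: mem_Bm_iff mem_Bm1_iff complement_def)
  qed
  then show ?thesis by (rule bij_betw_same_card)
qed

definition matchings :: "(monom \<Rightarrow> monom) set" where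
  "matchings = {phi. bij_betw phi Bm Bm1 \<and> (\<forall>x. x \<notin> Bm \<longrightarrow> phi x = undefined)
                     \<and> (\<forall>l \<in> Bm. step_monom (phi l) l)}"

definition x_steps :: "(monom \<Rightarrow> monom) \<Rightarrow> monom set" where
  "x_steps f = {l \<in> Bm. f l = times_x l}"

definition x_steps_above :: "(monom \<Rightarrow> monom) \<Rightarrow> nat \<Rightarrow> nat \<Rightarrow> nat" where
  "x_steps_above f i J = card {l \<in> x_steps f. deg_x l = i \<and> J \<le> deg_y l}"

definition layer :: "nat \<Rightarrow> monom set" where "layer i = {l \<in> Bm. deg_x l = i}"
definition layer1 :: "nat \<Rightarrow> monom set" where "layer1 i = {l \<in> Bm1. deg_x l = i}"

lemma finite_layer [simp]: "finite (layer i)" and finite_layer1 [simp]: "finite (layer1 i)"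
  by (auto simp: layer_def layer1_def)

text \<open>The number of \<open>x\<close>-steps in layer \<open>i\<close> of any matching (lemma \<open>card_x_steps_layer\<close>):
  a matching maps the non-\<open>x\<close>-steps of layer \<open>i\<close> and the \<open>x\<close>-steps of layer \<open>i - 1\<close>
  bijectively onto layer \<open>i\<close> of \<open>Bm1\<close>.\<close>

fun forced_x_count :: "nat \<Rightarrow> nat" where
  "forced_x_count 0 = card (layer 0) - card (layer1 0)"
| "forced_x_count (Suc i) = card (layer (Suc i)) + forced_x_count i - card (layer1 (Suc i))"

lemma x_steps_above_antimono: "J \<le> J' \<Longrightarrow> x_steps_above f i J' \<le> x_steps_above f i J"
  unfolding x_steps_above_def by (rule card_mono) (auto simp: x_steps_def)

lemma card_layer1_above_le:
  "card {mu \<in> layer1 i. J \<le> deg_y mu} \<le> card {l \<in> layer i. J \<le> deg_y l} + (if b \<le> i then 1 else 0)"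
proof -
  let ?R = "{mu \<in> layer1 i. J \<le> deg_y mu}" and ?C = "{l \<in> layer i. J \<le> deg_y l}"
  let ?E = "{mu \<in> ?R. deg_z mu = 0}"
  let ?h = "\<lambda>mu::monom. (deg_x mu, deg_y mu, deg_z mu - 1)"
  have "inj_on ?h (?R - ?E)"
    by (rule inj_onI) (auto simp: prod_eq_iff)
  moreover have "?h ` (?R - ?E) \<subseteq> ?C"
    by (auto simp: layer1_def layer_def mem_Bm1_iff mem_Bm_iff)
  ultimately have "card (?R - ?E) \<le> card ?C"
    by (intro card_inj_on_le) auto
  moreover have "card ?E \<le> (if b \<le> i then 1 else 0)"
  proof -
    have E: "?E \<subseteq> (if b \<le> i then {(i, a + b + c - 1 - i, 0)} else {})"
      by (auto simp: layer1_def mem_Bm1_iff prod_eq_iff)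
    have "card ?E \<le> card (if b \<le> i then {(i, a + b + c - 1 - i, 0::nat)} else {})"
      using E by (rule card_mono[rotated]) simp
    then show ?thesis by (cases "b \<le> i") simp_all
  qed
  moreover have "card ?R - card ?E \<le> card (?R - ?E)"
    by (rule diff_card_le_card_Diff) simp
  ultimately show ?thesis by linarith
qed

lemma card_layer_above_le:
  "card {l \<in> layer (Suc i). J \<le> deg_y l}
     \<le> card {mu \<in> layer1 (Suc i). Suc J \<le> deg_y mu} + (if Suc i < b then 1 else 0)"
proof -
  let ?R = "{mu \<in> layer1 (Suc i). Suc J \<le> deg_y mu}" and ?C = "{l \<in> layer (Suc i). J \<le> deg_y l}"
  let ?E = "{l \<in> ?C. deg_y l = a + c - 1}"
  have "card (?C - ?E) \<le> card ?R"
  proof (rule card_inj_on_le)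
    show "inj_on times_y (?C - ?E)" by (auto intro: inj_onI)
    show "times_y ` (?C - ?E) \<subseteq> ?R"
      by (auto simp: layer1_def layer_def mem_Bm1_iff mem_Bm_iff times_y_def)
  qed simp
  moreover have "card ?E \<le> (if Suc i < b then 1 else 0)"
  proof -
    have E: "?E \<subseteq> (if Suc i < b then {(Suc i, a + c - 1, b - 2 - i)} else {})"
      by (auto simp: layer_def mem_Bm_iff prod_eq_iff)
    have "card ?E \<le> card (if Suc i < b then {(Suc i, a + c - 1, b - 2 - i)} else {})"
      using E by (rule card_mono[rotated]) simp
    then show ?thesis by (cases "Suc i < b") simp_all
  qed
  moreover have "card ?C - card ?E \<le> card (?C - ?E)"
    by (rule diff_card_le_card_Diff) simp
  ultimately show ?thesis by linarith
qed

end

locale matching = box +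
  fixes phi :: "monom \<Rightarrow> monom"
  assumes phi_matching: "phi \<in> matchings"
begin

abbreviation "X \<equiv> x_steps phi"

lemma phi_bij: "bij_betw phi Bm Bm1" using phi_matching by (simp add: matchings_def)
lemma phi_inj: "inj_on phi Bm" using phi_bij by (simp add: bij_betw_def)
lemma phi_in_Bm1: "l \<in> Bm \<Longrightarrow> phi l \<in> Bm1" using phi_bij by (auto simp: bij_betw_def)
lemma phi_preimage: "mu \<in> Bm1 \<Longrightarrow> \<exists>l\<in>Bm. phi l = mu" using phi_bij by (metis bij_betw_def imageE)
lemma phi_outside: "l \<notin> Bm \<Longrightarrow> phi l = undefined" using phi_matching[unfolded matchings_def] by blast

lemma phi_step: "l \<in> Bm \<Longrightarrow> phi l = times_x l \<or> phi l = times_y l \<or> phi l = times_z l"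
  using phi_matching by (auto simp: matchings_def step_monom_iff)

lemma phi_not_x_step: "l \<in> Bm \<Longrightarrow> l \<notin> X \<Longrightarrow> phi l = times_y l \<or> phi l = times_z l"
  using phi_step[of l] by (auto simp: x_steps_def)

lemma X_subset_Bm: "X \<subseteq> Bm" by (auto simp: x_steps_def)
lemma finite_X [simp]: "finite X" using X_subset_Bm finite_Bm finite_subset by blast

lemma deg_x_phi: "l \<in> Bm \<Longrightarrow> deg_x (phi l) = (if l \<in> X then deg_x l + 1 else deg_x l)"
  using phi_step[of l] by (auto simp: x_steps_def times_x_def times_y_def times_z_def)

lemma deg_y_phi_x_step: "l \<in> X \<Longrightarrow> deg_y (phi l) = deg_y l"
  by (simp add: x_steps_def times_x_def)

lemma layer1_eq_image: "layer1 i = phi ` (layer i - X) \<union> phi ` {l \<in> X. deg_x l + 1 = i}"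
proof
  show "layer1 i \<subseteq> phi ` (layer i - X) \<union> phi ` {l \<in> X. deg_x l + 1 = i}"
  proof
    fix mu assume "mu \<in> layer1 i"
    then have mu: "mu \<in> Bm1" "deg_x mu = i" by (auto simp: layer1_def)
    then obtain l where l: "l \<in> Bm" "phi l = mu" using phi_preimage by blast
    show "mu \<in> phi ` (layer i - X) \<union> phi ` {l \<in> X. deg_x l + 1 = i}"
      using deg_x_phi[OF l(1)] l mu X_subset_Bm by (cases "l \<in> X") (auto simp: layer_def)
  qed
  show "phi ` (layer i - X) \<union> phi ` {l \<in> X. deg_x l + 1 = i} \<subseteq> layer1 i"
    using deg_x_phi phi_in_Bm1 X_subset_Bm by (auto simp: layer_def layer1_def)
qed

lemma card_layer1:
  "card (layer1 i) = card (layer i - X) + card {l \<in> X. deg_x l + 1 = i}"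
proof -
  have "(layer i - X) \<union> {l \<in> X. deg_x l + 1 = i} \<subseteq> Bm" using X_subset_Bm by (auto simp: layer_def)
  then have "card (layer1 i) = card ((layer i - X) \<union> {l \<in> X. deg_x l + 1 = i})"
    unfolding layer1_eq_image image_Un[symmetric] by (intro card_image inj_on_subset[OF phi_inj])
  also have "\<dots> = card (layer i - X) + card {l \<in> X. deg_x l + 1 = i}"
    by (rule card_Un_disjoint) auto
  finally show ?thesis .
qed

lemma card_layer: "card (layer i) = card (layer i - X) + card {l \<in> X. deg_x l = i}"
proof -
  have "layer i = (layer i - X) \<union> {l \<in> X. deg_x l = i}" using X_subset_Bm by (auto simp: layer_def)
  moreover have "card ((layer i - X) \<union> {l \<in> X. deg_x l = i})
      = card (layer i - X) + card {l \<in> X. deg_x l = i}"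
    by (rule card_Un_disjoint) auto
  ultimately show ?thesis by simp
qed

lemma card_x_steps_layer: "card {l \<in> X. deg_x l = i} = forced_x_count i"
proof (induction i)
  case 0
  then show ?case using card_layer1[of 0] card_layer[of 0] by simp
next
  case (Suc i)
  have "{l \<in> X. deg_x l + 1 = Suc i} = {l \<in> X. deg_x l = i}" by auto
  then show ?case using card_layer1[of "Suc i"] card_layer[of "Suc i"] Suc by simp
qed

lemma card_layer_minus_X: "card (layer i - X) = card (layer i) - forced_x_count i"
  using card_layer[of i] card_x_steps_layer[of i] by simp

abbreviation N where "N \<equiv> x_steps_above phi"

lemma x_steps_above_eq: "N i J = card (X \<inter> {l \<in> layer i. J \<le> deg_y l})"
  unfolding x_steps_above_def using X_subset_Bm
  by (intro arg_cong[where f = card]) (auto simp: layer_def)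

lemma x_steps_above_le_card_layer: "N i J \<le> card {l \<in> layer i. J \<le> deg_y l}"
  unfolding x_steps_above_eq by (intro card_mono) auto

lemma card_layer_above_minus_X:
  "card ({l \<in> layer i. J \<le> deg_y l} - X) = card {l \<in> layer i. J \<le> deg_y l} - N i J"
  by (simp add: card_Diff_subset_Int x_steps_above_eq Int_commute)

text \<open>For the interlacing inequalities, the matching maps the non-\<open>x\<close>-steps of one layer and
  the \<open>x\<close>-steps of the neighbouring one into, resp. onto, a part of \<open>Bm1\<close> of known size.\<close>

lemma x_steps_above_interlace_left:
  assumes "1 \<le> i"
  shows "N (i - 1) J \<le> N i J + (if b \<le> i then 1 else 0)"
proof -
  let ?R = "{mu \<in> layer1 i. J \<le> deg_y mu}" and ?C = "{l \<in> layer i. J \<le> deg_y l}"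
  let ?A = "?C - X" and ?B = "{l \<in> X. deg_x l = i - 1 \<and> J \<le> deg_y l}"
  have sub: "?A \<union> ?B \<subseteq> Bm" using X_subset_Bm by (auto simp: layer_def)
  have "phi ` (?A \<union> ?B) \<subseteq> ?R"
  proof
    fix mu assume "mu \<in> phi ` (?A \<union> ?B)"
    then obtain l where l: "l \<in> ?A \<union> ?B" "mu = phi l" by blast
    with sub have "l \<in> Bm" by blast
    then show "mu \<in> ?R"
      using l phi_in_Bm1[of l] phi_not_x_step[of l] assms
      by (cases "l \<in> X")
        (auto simp: layer1_def layer_def x_steps_def times_x_def times_y_def times_z_def)
  qed
  then have "card (phi ` (?A \<union> ?B)) \<le> card ?R" by (intro card_mono) auto
  moreover have "card (phi ` (?A \<union> ?B)) = card ?A + card ?B"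
  proof -
    have "card (phi ` (?A \<union> ?B)) = card (?A \<union> ?B)"
      using inj_on_subset[OF phi_inj sub] by (rule card_image)
    also have "\<dots> = card ?A + card ?B" using assms by (intro card_Un_disjoint) (auto simp: layer_def)
    finally show ?thesis .
  qed
  moreover have "card ?B = N (i - 1) J" by (simp add: x_steps_above_def)
  ultimately show ?thesis
    using card_layer1_above_le[of i J] card_layer_above_minus_X[of i J]
      x_steps_above_le_card_layer[of i J]
    by linarith
qed

lemma x_steps_above_interlace_right:
  "N (Suc i) J \<le> N i (Suc J) + (if Suc i < b then 1 else 0)"
proof -
  let ?R = "{mu \<in> layer1 (Suc i). Suc J \<le> deg_y mu}" and ?C = "{l \<in> layer (Suc i). J \<le> deg_y l}"
  let ?A = "?C - X" and ?B = "{l \<in> X. deg_x l = i \<and> Suc J \<le> deg_y l}"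
  have "?R \<subseteq> phi ` (?A \<union> ?B)"
  proof
    fix mu assume mu: "mu \<in> ?R"
    then have "mu \<in> Bm1" by (simp add: layer1_def)
    then obtain l where l: "l \<in> Bm" "phi l = mu" using phi_preimage by blast
    then have "l \<in> ?A \<union> ?B"
      using mu phi_not_x_step[of l]
      by (cases "l \<in> X")
        (auto simp: layer1_def layer_def x_steps_def times_x_def times_y_def times_z_def)
    then show "mu \<in> phi ` (?A \<union> ?B)" using l by blast
  qed
  then have "card ?R \<le> card (phi ` (?A \<union> ?B))" by (intro card_mono) auto
  also have "\<dots> \<le> card (?A \<union> ?B)" by (rule card_image_le) auto
  also have "\<dots> \<le> card ?A + card ?B" by (rule card_Un_le)
  finally have "card ?R \<le> card ?A + card ?B" .
  moreover have "card ?B = N i (Suc J)" by (simp add: x_steps_above_def)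
  ultimately show ?thesis
    using card_layer_above_le[of i J] card_layer_above_minus_X[of "Suc i" J]
      x_steps_above_le_card_layer[of "Suc i" J]
    by linarith
qed

end

context box
begin

lemma matching_if_mem_matchings: "f \<in> matchings \<Longrightarrow> matching a b c f"
  by (simp add: matching_def matching_axioms_def box_axioms)

text \<open>Take a monomial of maximal \<open>y\<close>-degree where \<open>f\<close> steps by \<open>y\<close> and \<open>g\<close> by \<open>z\<close>. The
  \<open>g\<close>-preimage of its \<open>f\<close>-image is another such monomial, of larger \<open>y\<close>-degree.\<close>

lemma no_y_step_against_z_step:
  assumes f: "f \<in> matchings" and g: "g \<in> matchings" and same_X: "x_steps f = x_steps g"
  shows "\<not> (\<exists>l\<in>Bm. f l = times_y l \<and> g l = times_z l)"
proof
  interpret F: matching a b c f by (rule matching_if_mem_matchings[OF f])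
  interpret G: matching a b c g by (rule matching_if_mem_matchings[OF g])
  let ?D = "{l\<in>Bm. f l = times_y l \<and> g l = times_z l}"
  assume "\<exists>l\<in>Bm. f l = times_y l \<and> g l = times_z l"
  then have "deg_y ` ?D \<noteq> {}" by blast
  moreover have "finite (deg_y ` ?D)" by simp
  ultimately obtain l where l: "l \<in> ?D" and "deg_y l = Max (deg_y ` ?D)"
    by (metis (no_types, lifting) Max_in imageE)
  with \<open>finite (deg_y ` ?D)\<close> have l_max: "\<And>l'. l' \<in> ?D \<Longrightarrow> deg_y l' \<le> deg_y l" by simp
  from l have lB: "l \<in> Bm" and fl: "f l = times_y l" and gl: "g l = times_z l" by auto
  obtain l' where l'B: "l' \<in> Bm" and gl': "g l' = times_y l"
    using G.phi_preimage F.phi_in_Bm1[OF lB] fl by metis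
  have "f l' \<noteq> times_x l'"
  proof
    assume "f l' = times_x l'"
    then have "g l' = times_x l'" using same_X l'B by (auto simp: x_steps_def)
    with gl' have "l' = l" using F.phi_inj \<open>f l' = times_x l'\<close> fl lB l'B by (metis inj_onD)
    then show False using gl' \<open>g l' = times_x l'\<close> by simp
  qed
  moreover have g_z: "g l' = times_z l'"
  proof -
    have "l' \<notin> x_steps g" using \<open>f l' \<noteq> times_x l'\<close> same_X[symmetric] by (simp add: x_steps_def)
    then have "g l' \<noteq> times_x l'" using l'B by (simp add: x_steps_def)
    moreover have "g l' \<noteq> times_y l'" using gl' gl by auto
    ultimately show ?thesis using G.phi_step[OF l'B] by blast
  qed
  moreover have "l' \<noteq> l" using g_z gl' gl by auto
  then have "f l' \<noteq> times_z l'"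
    using gl' g_z fl F.phi_inj lB l'B by (metis inj_onD)
  ultimately have "l' \<in> ?D" using F.phi_step[OF l'B] l'B by auto
  moreover have "deg_y l' = deg_y l + 1"
    using gl' g_z by (cases l, cases l') (simp add: times_y_def times_z_def)
  ultimately show False using l_max by fastforce
qed

lemma matching_eq_if_x_steps_eq:
  assumes f: "f \<in> matchings" and g: "g \<in> matchings" and same_X: "x_steps f = x_steps g"
  shows "f = g"
proof
  interpret F: matching a b c f by (rule matching_if_mem_matchings[OF f])
  interpret G: matching a b c g by (rule matching_if_mem_matchings[OF g])
  fix l
  show "f l = g l"
  proof (cases "l \<in> Bm")
    case True
    have "f l = times_x l \<longleftrightarrow> g l = times_x l" using same_X True by (auto simp: x_steps_def)
    moreover have "\<not> (f l = times_y l \<and> g l = times_z l)" "\<not> (g l = times_y l \<and> f l = times_z l)"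
      using True no_y_step_against_z_step[OF f g same_X]
        no_y_step_against_z_step[OF g f same_X[symmetric]]
      by blast+
    ultimately show ?thesis using F.phi_step[OF True] G.phi_step[OF True] by fastforce
  qed (simp add: F.phi_outside G.phi_outside)
qed

end

section \<open>The plane partition of a matching\<close>

context box
begin

text \<open>Cell \<open>(u, v)\<close> of the base of the box belongs to layer \<open>b - 1 + u - v\<close> and is the
  \<open>(min u v + 1)\<close>-th cell of that diagonal. Cube \<open>(u, v, w)\<close> belongs to the plane partition
  of a matching iff that many \<open>x\<close>-steps of the layer have \<open>y\<close>-degree at least \<open>a - u + w\<close>.\<close>

definition stack_above :: "(monom \<Rightarrow> monom) \<Rightarrow> nat \<Rightarrow> nat \<Rightarrow> nat \<Rightarrow> bool" where
  "stack_above f u v J \<longleftrightarrow> min u v + 1 \<le> x_steps_above f (b - 1 + u - v) J"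

definition pp_of_matching :: "(monom \<Rightarrow> monom) \<Rightarrow> nat \<Rightarrow> nat \<Rightarrow> nat" where
  "pp_of_matching f u v =
     (if u < a \<and> v < b then card {w. w < c \<and> stack_above f u v (a - u + w)} else 0)"

lemma stack_above_antimono: "J \<le> J' \<Longrightarrow> stack_above f u v J' \<Longrightarrow> stack_above f u v J"
  unfolding stack_above_def using x_steps_above_antimono by (meson le_trans)

lemma pp_of_matching_le: "pp_of_matching f u v \<le> c"
proof -
  have "card {w. w < c \<and> P w} \<le> c" for P using card_mono[of "{..<c}" "{w. w < c \<and> P w}"] by auto
  then show ?thesis unfolding pp_of_matching_def by simp
qed

end

context matching
begin

lemma stack_above_Suc_u:
  assumes "Suc u < a" "v < b" "stack_above phi (Suc u) v J"
  shows "stack_above phi u v (Suc J)"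
proof -
  define i where "i = b - 1 + u - v"
  have "b - 1 + Suc u - v = Suc i" using assms b_pos by (simp add: i_def)
  then have "min (Suc u) v + 1 \<le> N (Suc i) J" using assms(3) by (simp add: stack_above_def)
  moreover have "Suc i < b \<longleftrightarrow> u < v" using assms b_pos unfolding i_def by arith
  ultimately have "min u v + 1 \<le> N i (Suc J)"
    using x_steps_above_interlace_right[of i J] by (auto split: if_splits)
  then show ?thesis by (simp add: stack_above_def i_def)
qed

lemma stack_above_Suc_v:
  assumes "u < a" "Suc v < b" "stack_above phi u (Suc v) J"
  shows "stack_above phi u v J"
proof -
  define i where "i = b - 1 + u - v"
  have "b - 1 + u - Suc v = i - 1" using assms b_pos by (simp add: i_def)
  then have "min u (Suc v) + 1 \<le> N (i - 1) J" using assms(3) by (simp add: stack_above_def)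
  moreover have "1 \<le> i" using assms by (simp add: i_def)
  moreover have "b \<le> i \<longleftrightarrow> v < u" using assms b_pos unfolding i_def by arith
  ultimately have "min u v + 1 \<le> N i J"
    using x_steps_above_interlace_left[of i J] by (auto split: if_splits)
  then show ?thesis by (simp add: stack_above_def i_def)
qed

lemma pp_of_matching_in_box_PP: "pp_of_matching phi \<in> box_PP a b c"
proof -
  let ?p = "pp_of_matching phi"
  have "{(i, j). ?p i j \<noteq> 0} \<subseteq> {..<a} \<times> {..<b}"
    by (auto simp: pp_of_matching_def split: if_splits)
  then have "finite {(i, j). ?p i j \<noteq> 0}" by (rule finite_subset) auto
  moreover have "?p (Suc i) j \<le> ?p i j" for i j
  proof (cases "Suc i < a \<and> j < b")
    case True
    have "Suc (a - Suc i + w) = a - i + w" for w using True by arith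
    then have "{w. w < c \<and> stack_above phi (Suc i) j (a - Suc i + w)}
        \<subseteq> {w. w < c \<and> stack_above phi i j (a - i + w)}"
      using stack_above_Suc_u True by (metis (no_types, lifting) mem_Collect_eq subsetI)
    then show ?thesis using True by (simp add: pp_of_matching_def card_mono)
  qed (auto simp: pp_of_matching_def)
  moreover have "?p i (Suc j) \<le> ?p i j" for i j
  proof (cases "i < a \<and> Suc j < b")
    case True
    then have "{w. w < c \<and> stack_above phi i (Suc j) (a - i + w)}
        \<subseteq> {w. w < c \<and> stack_above phi i j (a - i + w)}"
      using stack_above_Suc_v by blast
    then show ?thesis using True by (simp add: pp_of_matching_def card_mono)
  qed (auto simp: pp_of_matching_def)
  moreover have "fits_in_box a b c ?p"
    using pp_of_matching_le by (auto simp: fits_in_box_def pp_of_matching_def split: if_splits)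
  ultimately show ?thesis by (simp add: box_PP_def plane_partition_def)
qed

end

section \<open>The matching of a plane partition\<close>

locale box_partition = box +
  fixes p :: "nat \<Rightarrow> nat \<Rightarrow> nat"
  assumes p_in: "p \<in> box_PP a b c"
begin

lemma p_le_c: "p u v \<le> c" using p_in by (simp add: box_PP_def fits_in_box_def)
lemma p_outside: "\<not> (u < a \<and> v < b) \<Longrightarrow> p u v = 0"
  using p_in by (auto simp: box_PP_def fits_in_box_def)
lemma p_antimono_u: "u \<le> u' \<Longrightarrow> p u' v \<le> p u v"
proof -
  assume "u \<le> u'"
  have "\<And>n. p (Suc n) v \<le> p n v" using p_in by (simp add: box_PP_def plane_partition_def)
  then show ?thesis using lift_Suc_antimono_le[of "\<lambda>n. p n v"] \<open>u \<le> u'\<close> by blast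
qed
lemma p_antimono_v: "v \<le> v' \<Longrightarrow> p u v' \<le> p u v"
proof -
  assume "v \<le> v'"
  have "\<And>n. p u (Suc n) \<le> p u n" using p_in by (simp add: box_PP_def plane_partition_def)
  then show ?thesis using lift_Suc_antimono_le[of "\<lambda>n. p u n"] \<open>v \<le> v'\<close> by blast
qed

definition len_u :: "nat \<Rightarrow> nat \<Rightarrow> nat" where "len_u v w = card {u. u < a \<and> w < p u v}"
definition len_v :: "nat \<Rightarrow> nat \<Rightarrow> nat" where "len_v u w = card {v. v < b \<and> w < p u v}"

lemma len_u_eq: "{u. u < a \<and> w < p u v} = {..<len_u v w}"
  unfolding len_u_def
  by (rule downward_closed_eq_lessThan) (auto intro: less_le_trans[OF _ p_antimono_u])
lemma len_v_eq: "{v. v < b \<and> w < p u v} = {..<len_v u w}"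
  unfolding len_v_def
  by (rule downward_closed_eq_lessThan) (auto intro: less_le_trans[OF _ p_antimono_v])

lemma less_len_u_iff: "u < len_u v w \<longleftrightarrow> u < a \<and> w < p u v"
  using len_u_eq[of w v] by (metis (no_types, lifting) lessThan_iff mem_Collect_eq)
lemma less_len_v_iff: "v < len_v u w \<longleftrightarrow> v < b \<and> w < p u v"
  using len_v_eq[of w u] by (metis (no_types, lifting) lessThan_iff mem_Collect_eq)

lemma len_u_le: "len_u v w \<le> a"
proof -
  have "card {u. u < a \<and> w < p u v} \<le> card {..<a}" by (rule card_mono) auto
  then show ?thesis by (simp add: len_u_def)
qed
lemma len_v_le: "len_v u w \<le> b"
proof -
  have "card {v. v < b \<and> w < p u v} \<le> card {..<b}" by (rule card_mono) auto
  then show ?thesis by (simp add: len_v_def)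
qed

lemma len_u_antimono: "v \<le> v' \<Longrightarrow> w \<le> w' \<Longrightarrow> len_u v' w' \<le> len_u v w"
  unfolding len_u_def by (rule card_mono) (auto, meson le_less_trans less_le_trans p_antimono_v)
lemma len_v_antimono: "u \<le> u' \<Longrightarrow> w \<le> w' \<Longrightarrow> len_v u' w' \<le> len_v u w"
  unfolding len_v_def by (rule card_mono) (auto, meson le_less_trans less_le_trans p_antimono_u)

text \<open>The matching of \<open>p\<close> multiplies by \<open>x\<close> the monomial \<open>x_tile u v\<close> under the top
  face of the stack at \<open>(u, v)\<close>, and by \<open>z\<close> and \<open>y\<close> the monomials under the faces visible
  along the \<open>u\<close>- and \<open>v\<close>-axes, where \<open>len_u v w\<close> and \<open>len_v u w\<close> are the lengths of the
  layer of cubes at height \<open>w\<close> in these directions.\<close>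

definition x_tile :: "nat \<Rightarrow> nat \<Rightarrow> monom" where
  "x_tile u v = (b - 1 + u - v, a - 1 - u + p u v, c + v - p u v)"
definition z_tile :: "nat \<Rightarrow> nat \<Rightarrow> monom" where
  "z_tile v w = (b - 1 + len_u v w - v, a - len_u v w + w, c - 1 + v - w)"
definition y_tile :: "nat \<Rightarrow> nat \<Rightarrow> monom" where
  "y_tile u w = (b + u - len_v u w, a - 1 - u + w, c - 1 + len_v u w - w)"

lemma x_tile_mem: assumes "u < a" "v < b" shows "x_tile u v \<in> Bm" "times_x (x_tile u v) \<in> Bm1"
  using assms p_le_c[of u v] a_pos b_pos c_pos
  by (auto simp: x_tile_def times_x_def mem_Bm_iff mem_Bm1_iff)

lemma z_tile_mem: assumes "v < b" "w < c" shows "z_tile v w \<in> Bm" "times_z (z_tile v w) \<in> Bm1"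
  using assms len_u_le[of v w] a_pos b_pos c_pos
  by (auto simp: z_tile_def times_z_def mem_Bm_iff mem_Bm1_iff)

lemma y_tile_mem: assumes "u < a" "w < c" shows "y_tile u w \<in> Bm" "times_y (y_tile u w) \<in> Bm1"
  using assms len_v_le[of u w] a_pos b_pos c_pos
  by (auto simp: y_tile_def times_y_def mem_Bm_iff mem_Bm1_iff)


lemma x_tile_ne_z_tile:
  assumes "u < a" "v < b" "v' < b" "w < c"
  shows "x_tile u v \<noteq> z_tile v' w"
proof
  assume eq: "x_tile u v = z_tile v' w"
  define q where "q = len_u v' w"
  have ql: "q \<le> a" using len_u_le by (simp add: q_def)
  have e: "b - 1 + u - v = b - 1 + q - v' \<and> a - 1 - u + p u v = a - q + w"
    using eq unfolding x_tile_def z_tile_def prod.inject q_def by blast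
  have r1: "u + v' = q + v" using e assms b_pos by arith
  have r2: "p u v + q = w + u + 1" using e assms ql by arith
  show False
  proof (cases "u < q")
    case True
    then have w1: "w < p u v'" using less_len_u_iff assms unfolding q_def by blast
    have "v \<le> v'" using r1 True by arith
    then have "p u v' \<le> p u v" by (rule p_antimono_v)
    then show False using w1 r2 True by arith
  next
    case False
    then have w1: "\<not> w < p u v'" using less_len_u_iff assms unfolding q_def by blast
    have "v' \<le> v" using r1 False by arith
    then have "p u v \<le> p u v'" by (rule p_antimono_v)
    then show False using w1 r2 False by arith
  qed
qed

lemma x_tile_ne_y_tile:
  assumes "u < a" "v < b" "u' < a" "w < c"
  shows "x_tile u v \<noteq> y_tile u' w"
proof
  assume eq: "x_tile u v = y_tile u' w"
  define q where "q = len_v u' w"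
  have ql: "q \<le> b" using len_v_le by (simp add: q_def)
  have e: "b - 1 + u - v = b + u' - q \<and> a - 1 - u + p u v = a - 1 - u' + w"
    using eq unfolding x_tile_def y_tile_def prod.inject q_def by blast
  have r1: "u + q = u' + v + 1" using e assms b_pos ql by arith
  have r2: "p u v + u' = w + u" using e assms by arith
  show False
  proof (cases "v < q")
    case True
    then have w1: "w < p u' v" using less_len_v_iff assms unfolding q_def by blast
    have "u \<le> u'" using r1 True by arith
    then have "p u' v \<le> p u v" by (rule p_antimono_u)
    then show False using w1 r2 \<open>u \<le> u'\<close> by arith
  next
    case False
    then have w1: "\<not> w < p u' v" using less_len_v_iff assms unfolding q_def by blast
    have "u' < u" using r1 False by arith
    then have "p u v \<le> p u' v" by (intro p_antimono_u) simp
    then show False using w1 r2 \<open>u' < u\<close> by arith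
  qed
qed

lemma y_tile_ne_z_tile:
  assumes "u < a" "w < c" "v < b" "w' < c"
  shows "y_tile u w \<noteq> z_tile v w'"
proof
  assume eq: "y_tile u w = z_tile v w'"
  define q where "q = len_v u w"
  define r where "r = len_u v w'"
  have ql: "q \<le> b" using len_v_le by (simp add: q_def)
  have rl: "r \<le> a" using len_u_le by (simp add: r_def)
  have e: "b + u - q = b - 1 + r - v \<and> a - 1 - u + w = a - r + w'"
    using eq unfolding y_tile_def z_tile_def prod.inject q_def r_def by blast
  have r1: "u + v + 1 = r + q" using e assms b_pos ql by arith
  have r2: "w + r = u + 1 + w'" using e assms rl by arith
  show False
  proof (cases "u < r")
    case True
    then have w1: "w' < p u v" using less_len_u_iff assms unfolding r_def by blast
    have "\<not> v < q" using r1 True by arith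
    then have "\<not> w < p u v" using less_len_v_iff assms unfolding q_def by blast
    then show False using w1 r2 True by arith
  next
    case False
    then have w1: "\<not> w' < p u v" using less_len_u_iff assms unfolding r_def by blast
    have "v < q" using r1 False by arith
    then have "w < p u v" using less_len_v_iff assms unfolding q_def by blast
    then show False using w1 r2 False by arith
  qed
qed

lemma times_x_tile_ne_times_z_tile:
  assumes "u < a" "v < b" "v' < b" "w < c"
  shows "times_x (x_tile u v) \<noteq> times_z (z_tile v' w)"
proof
  assume eq: "times_x (x_tile u v) = times_z (z_tile v' w)"
  define q where "q = len_u v' w"
  have ql: "q \<le> a" using len_u_le by (simp add: q_def)
  have e: "b - 1 + u - v + 1 = b - 1 + q - v' \<and> a - 1 - u + p u v = a - q + w"
    using eq unfolding x_tile_def z_tile_def times_x_def times_z_def deg_simps prod.inject q_def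
    by blast
  have r1: "u + v' + 1 = q + v" using e assms b_pos by arith
  have r2: "p u v + q = w + u + 1" using e assms ql by arith
  show False
  proof (cases "u < q")
    case True
    then have w1: "w < p u v'" using less_len_u_iff assms unfolding q_def by blast
    have "v \<le> v'" using r1 True by arith
    then have "p u v' \<le> p u v" by (rule p_antimono_v)
    then show False using w1 r2 True by arith
  next
    case False
    then have w1: "\<not> w < p u v'" using less_len_u_iff assms unfolding q_def by blast
    have "v' \<le> v" using r1 False by arith
    then have "p u v \<le> p u v'" by (rule p_antimono_v)
    then show False using w1 r2 False by arith
  qed
qed

lemma times_x_tile_ne_times_y_tile:
  assumes "u < a" "v < b" "u' < a" "w < c"
  shows "times_x (x_tile u v) \<noteq> times_y (y_tile u' w)"
proof
  assume eq: "times_x (x_tile u v) = times_y (y_tile u' w)"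
  define q where "q = len_v u' w"
  have ql: "q \<le> b" using len_v_le by (simp add: q_def)
  have e: "b - 1 + u - v + 1 = b + u' - q \<and> a - 1 - u + p u v = a - 1 - u' + w + 1"
    using eq unfolding x_tile_def y_tile_def times_x_def times_y_def deg_simps prod.inject q_def
    by blast
  have r1: "u + q = u' + v" using e assms b_pos ql by arith
  have r2: "p u v + u' = w + u + 1" using e assms by arith
  show False
  proof (cases "v < q")
    case True
    then have w1: "w < p u' v" using less_len_v_iff assms unfolding q_def by blast
    have "u \<le> u'" using r1 True by arith
    then have "p u' v \<le> p u v" by (rule p_antimono_u)
    then show False using w1 r2 True r1 by arith
  next
    case False
    then have w1: "\<not> w < p u' v" using less_len_v_iff assms unfolding q_def by blast
    have "u' \<le> u" using r1 False by arith
    then have "p u v \<le> p u' v" by (rule p_antimono_u)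
    then show False using w1 r2 \<open>u' \<le> u\<close> by arith
  qed
qed

lemma times_y_tile_ne_times_z_tile:
  assumes "u < a" "w < c" "v < b" "w' < c"
  shows "times_y (y_tile u w) \<noteq> times_z (z_tile v w')"
proof
  assume eq: "times_y (y_tile u w) = times_z (z_tile v w')"
  define q where "q = len_v u w"
  define r where "r = len_u v w'"
  have ql: "q \<le> b" using len_v_le by (simp add: q_def)
  have rl: "r \<le> a" using len_u_le by (simp add: r_def)
  have e: "b + u - q = b - 1 + r - v \<and> a - 1 - u + w + 1 = a - r + w'"
    using eq
    unfolding y_tile_def z_tile_def times_y_def times_z_def deg_simps prod.inject q_def r_def
    by blast
  have r1: "u + v + 1 = r + q" using e assms b_pos ql by arith
  have r2: "w + r = u + w'" using e assms rl by arith
  show False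
  proof (cases "u < r")
    case True
    then have w1: "w' < p u v" using less_len_u_iff assms unfolding r_def by blast
    have "\<not> v < q" using r1 True by arith
    then have "\<not> w < p u v" using less_len_v_iff assms unfolding q_def by blast
    then show False using w1 r2 True by arith
  next
    case False
    then have w1: "\<not> w' < p u v" using less_len_u_iff assms unfolding r_def by blast
    have "v < q" using r1 False by arith
    then have "w < p u v" using less_len_v_iff assms unfolding q_def by blast
    then show False using w1 r2 False by arith
  qed
qed

lemma x_tile_inj:
  assumes "u < a" "v < b" "u' < a" "v' < b" "x_tile u v = x_tile u' v'"
  shows "u = u' \<and> v = v'"
proof -
  have e: "b - 1 + u - v = b - 1 + u' - v' \<and> a - 1 - u + p u v = a - 1 - u' + p u' v'"
    using assms(5) unfolding x_tile_def prod.inject by blast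
  have r1: "u + v' = u' + v" using e assms b_pos by arith
  have r2: "p u v + u' = p u' v' + u" using e assms by arith
  have "\<not> u < u'"
  proof
    assume "u < u'"
    then have "v \<le> v'" "u \<le> u'" using r1 by arith+
    then have "p u' v' \<le> p u v" using p_antimono_u p_antimono_v le_trans by blast
    then show False using r2 \<open>u < u'\<close> by arith
  qed
  moreover have "\<not> u' < u"
  proof
    assume "u' < u"
    then have "v' \<le> v" "u' \<le> u" using r1 by arith+
    then have "p u v \<le> p u' v'" using p_antimono_u p_antimono_v le_trans by blast
    then show False using r2 \<open>u' < u\<close> by arith
  qed
  ultimately show ?thesis using r1 by arith
qed

lemma z_tile_inj:
  assumes "v < b" "w < c" "v' < b" "w' < c" "z_tile v w = z_tile v' w'"
  shows "v = v' \<and> w = w'"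
proof -
  have e: "b - 1 + len_u v w - v = b - 1 + len_u v' w' - v' \<and> c - 1 + v - w = c - 1 + v' - w'"
    using assms(5) unfolding z_tile_def prod.inject by blast
  have r1: "len_u v w + v' = len_u v' w' + v" using e assms b_pos by arith
  have r3: "v + w' = v' + w" using e assms c_pos by arith
  have "\<not> v < v'"
  proof
    assume "v < v'"
    then have "w \<le> w'" "v \<le> v'" using r3 by arith+
    then have "len_u v' w' \<le> len_u v w" by (simp add: len_u_antimono)
    then show False using r1 \<open>v < v'\<close> by arith
  qed
  moreover have "\<not> v' < v"
  proof
    assume "v' < v"
    then have "w' \<le> w" "v' \<le> v" using r3 by arith+
    then have "len_u v w \<le> len_u v' w'" by (simp add: len_u_antimono)
    then show False using r1 \<open>v' < v\<close> by arith
  qed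
  ultimately show ?thesis using r3 by arith
qed

lemma y_tile_inj:
  assumes "u < a" "w < c" "u' < a" "w' < c" "y_tile u w = y_tile u' w'"
  shows "u = u' \<and> w = w'"
proof -
  have e: "b + u - len_v u w = b + u' - len_v u' w' \<and> a - 1 - u + w = a - 1 - u' + w'"
    using assms(5) unfolding y_tile_def prod.inject by blast
  have ql: "len_v u w \<le> b" "len_v u' w' \<le> b" using len_v_le by auto
  have r1: "u + len_v u' w' = u' + len_v u w" using e assms ql by arith
  have r2: "w + u' = w' + u" using e assms by arith
  have "\<not> u < u'"
  proof
    assume "u < u'"
    then have "w \<le> w'" "u \<le> u'" using r2 by arith+
    then have "len_v u' w' \<le> len_v u w" by (simp add: len_v_antimono)
    then show False using r1 \<open>u < u'\<close> by arith
  qed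
  moreover have "\<not> u' < u"
  proof
    assume "u' < u"
    then have "w' \<le> w" "u' \<le> u" using r2 by arith+
    then have "len_v u w \<le> len_v u' w'" by (simp add: len_v_antimono)
    then show False using r1 \<open>u' < u\<close> by arith
  qed
  ultimately show ?thesis using r2 by arith
qed

end

context box
begin

text \<open>Every monomial of degree \<open>m\<close> is a tile of the empty plane partition.\<close>

lemma Bm_cases:
  assumes "l \<in> Bm"
  obtains (x) u v where "u < a" "v < b" "l = (b - 1 + u - v, a - 1 - u, c + v)"
  | (y) u w where "u < a" "w < c" "l = (b + u, a - 1 - u + w, c - 1 - w)"
  | (z) v w where "v < b" "w < c" "l = (b - 1 - v, a + w, c - 1 + v - w)"
proof -
  obtain i j k where l: "l = (i, j, k)" by (cases l)
  have h: "i < a + b" "j < a + c" "k < b + c" "i + j + k = a + b + c - 2"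
    using assms l by (auto simp: mem_Bm_iff)
  consider "a \<le> j" "i < b" | "a \<le> j" "b \<le> i" | "j < a" "c \<le> k" | "j < a" "k < c" by linarith
  then show ?thesis
  proof cases
    case 1
    then show ?thesis using h l by (intro z[of "b - 1 - i" "j - a"]) auto
  next
    case 2
    then show ?thesis using h l c_pos by (intro y[of "i - b" "c - 1 - k"]) auto
  next
    case 3
    then show ?thesis using h l by (intro x[of "a - 1 - j" "k - c"]) auto
  next
    case 4
    then show ?thesis using h l c_pos by (intro y[of "i - b" "c - 1 - k"]) auto
  qed
qed

lemma card_Bm_le: "card Bm \<le> a * b + a * c + b * c"
proof -
  let ?X = "(\<lambda>(u,v). (b - 1 + u - v, a - 1 - u, c + v)) ` ({..<a} \<times> {..<b})"
  let ?Y = "(\<lambda>(u,w). (b + u, a - 1 - u + w, c - 1 - w)) ` ({..<a} \<times> {..<c})"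
  let ?Z = "(\<lambda>(v,w). (b - 1 - v, a + w, c - 1 + v - w)) ` ({..<b} \<times> {..<c})"
  have "Bm \<subseteq> ?X \<union> ?Y \<union> ?Z"
  proof
    fix l assume "l \<in> Bm"
    then show "l \<in> ?X \<union> ?Y \<union> ?Z" by (cases rule: Bm_cases) force+
  qed
  then have "card Bm \<le> card (?X \<union> ?Y \<union> ?Z)" by (intro card_mono) auto
  also have "\<dots> \<le> card ?X + card ?Y + card ?Z" by (meson card_Un_le add_le_mono1 le_trans)
  also have "\<dots> \<le> a * b + a * c + b * c"
  proof -
    have "card ?X \<le> a * b" "card ?Y \<le> a * c" "card ?Z \<le> b * c"
      using card_image_le[of "{..<a} \<times> {..<b}"] card_image_le[of "{..<a} \<times> {..<c}"]
        card_image_le[of "{..<b} \<times> {..<c}"]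
      by (simp_all add: card_cartesian_product)
    then show ?thesis by linarith
  qed
  finally show ?thesis .
qed

end

context box_partition
begin

definition "x_tiles = (\<lambda>(u,v). x_tile u v) ` ({..<a} \<times> {..<b})"
definition "y_tiles = (\<lambda>(u,w). y_tile u w) ` ({..<a} \<times> {..<c})"
definition "z_tiles = (\<lambda>(v,w). z_tile v w) ` ({..<b} \<times> {..<c})"

lemma mem_x_tiles_iff: "l \<in> x_tiles \<longleftrightarrow> (\<exists>u v. u < a \<and> v < b \<and> l = x_tile u v)"
  by (auto simp: x_tiles_def)
lemma mem_y_tiles_iff: "l \<in> y_tiles \<longleftrightarrow> (\<exists>u w. u < a \<and> w < c \<and> l = y_tile u w)"
  by (auto simp: y_tiles_def)
lemma mem_z_tiles_iff: "l \<in> z_tiles \<longleftrightarrow> (\<exists>v w. v < b \<and> w < c \<and> l = z_tile v w)"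
  by (auto simp: z_tiles_def)

lemma card_x_tiles: "card x_tiles = a * b"
proof -
  have "inj_on (\<lambda>(u,v). x_tile u v) ({..<a} \<times> {..<b})"
    by (rule inj_onI) (use x_tile_inj in auto)
  then show ?thesis unfolding x_tiles_def by (simp add: card_image card_cartesian_product)
qed
lemma card_y_tiles: "card y_tiles = a * c"
proof -
  have "inj_on (\<lambda>(u,w). y_tile u w) ({..<a} \<times> {..<c})"
    by (rule inj_onI) (use y_tile_inj in auto)
  then show ?thesis unfolding y_tiles_def by (simp add: card_image card_cartesian_product)
qed
lemma card_z_tiles: "card z_tiles = b * c"
proof -
  have "inj_on (\<lambda>(v,w). z_tile v w) ({..<b} \<times> {..<c})"
    by (rule inj_onI) (use z_tile_inj in auto)
  then show ?thesis unfolding z_tiles_def by (simp add: card_image card_cartesian_product)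
qed

lemma x_tiles_y_tiles_disjoint: "x_tiles \<inter> y_tiles = {}"
  using x_tile_ne_y_tile by (fastforce simp: x_tiles_def y_tiles_def)

lemma x_tiles_z_tiles_disjoint: "x_tiles \<inter> z_tiles = {}"
  using x_tile_ne_z_tile by (fastforce simp: x_tiles_def z_tiles_def)

lemma y_tiles_z_tiles_disjoint: "y_tiles \<inter> z_tiles = {}"
  using y_tile_ne_z_tile by (fastforce simp: y_tiles_def z_tiles_def)

lemma tiles_subset_Bm: "x_tiles \<union> y_tiles \<union> z_tiles \<subseteq> Bm"
  using x_tile_mem y_tile_mem z_tile_mem
  by (auto simp: mem_x_tiles_iff mem_y_tiles_iff mem_z_tiles_iff)

lemma tiles_eq_Bm: "x_tiles \<union> y_tiles \<union> z_tiles = Bm"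
proof -
  have fin: "finite x_tiles" "finite y_tiles" "finite z_tiles"
    by (simp_all add: x_tiles_def y_tiles_def z_tiles_def)
  have "card (x_tiles \<union> y_tiles \<union> z_tiles) = card x_tiles + card y_tiles + card z_tiles"
    using fin x_tiles_y_tiles_disjoint x_tiles_z_tiles_disjoint y_tiles_z_tiles_disjoint
    by (simp add: card_Un_disjoint Int_Un_distrib2)
  then have "card (x_tiles \<union> y_tiles \<union> z_tiles) = a * b + a * c + b * c"
    by (simp add: card_x_tiles card_y_tiles card_z_tiles)
  then have "card Bm \<le> card (x_tiles \<union> y_tiles \<union> z_tiles)" using card_Bm_le by simp
  then show ?thesis using tiles_subset_Bm by (intro card_seteq) auto
qed

definition matching_of_pp :: "monom \<Rightarrow> monom" where
  "matching_of_pp l =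
     (if l \<in> x_tiles then times_x l else if l \<in> y_tiles then times_y l
      else if l \<in> z_tiles then times_z l else undefined)"

lemma matching_of_pp_x_tile: "l \<in> x_tiles \<Longrightarrow> matching_of_pp l = times_x l"
  by (simp add: matching_of_pp_def)
lemma matching_of_pp_y_tile: "l \<in> y_tiles \<Longrightarrow> matching_of_pp l = times_y l"
  using x_tiles_y_tiles_disjoint by (auto simp: matching_of_pp_def)
lemma matching_of_pp_z_tile: "l \<in> z_tiles \<Longrightarrow> matching_of_pp l = times_z l"
  using x_tiles_z_tiles_disjoint y_tiles_z_tiles_disjoint by (auto simp: matching_of_pp_def)

lemma matching_of_pp_in_Bm1: "l \<in> Bm \<Longrightarrow> matching_of_pp l \<in> Bm1"
proof -
  assume "l \<in> Bm"
  then have "l \<in> x_tiles \<or> l \<in> y_tiles \<or> l \<in> z_tiles" using tiles_eq_Bm by blast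
  then show ?thesis
  proof (elim disjE)
    assume "l \<in> x_tiles" then show ?thesis
      using x_tile_mem matching_of_pp_x_tile by (auto simp: mem_x_tiles_iff)
  next
    assume "l \<in> y_tiles" then show ?thesis
      using y_tile_mem matching_of_pp_y_tile by (auto simp: mem_y_tiles_iff)
  next
    assume "l \<in> z_tiles" then show ?thesis
      using z_tile_mem matching_of_pp_z_tile by (auto simp: mem_z_tiles_iff)
  qed
qed

lemma times_x_tiles_times_y_tiles_disjoint: "times_x ` x_tiles \<inter> times_y ` y_tiles = {}"
  using times_x_tile_ne_times_y_tile by (fastforce simp: x_tiles_def y_tiles_def)

lemma times_x_tiles_times_z_tiles_disjoint: "times_x ` x_tiles \<inter> times_z ` z_tiles = {}"
  using times_x_tile_ne_times_z_tile by (fastforce simp: x_tiles_def z_tiles_def)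

lemma times_y_tiles_times_z_tiles_disjoint: "times_y ` y_tiles \<inter> times_z ` z_tiles = {}"
  using times_y_tile_ne_times_z_tile by (fastforce simp: y_tiles_def z_tiles_def)

lemma inj_on_matching_of_pp: "inj_on matching_of_pp Bm"
proof -
  have images: "matching_of_pp ` x_tiles = times_x ` x_tiles"
    "matching_of_pp ` y_tiles = times_y ` y_tiles" "matching_of_pp ` z_tiles = times_z ` z_tiles"
    by (auto simp: matching_of_pp_x_tile matching_of_pp_y_tile matching_of_pp_z_tile)
  have "inj_on matching_of_pp x_tiles" "inj_on matching_of_pp y_tiles"
    "inj_on matching_of_pp z_tiles"
    by (auto simp: inj_on_def matching_of_pp_x_tile matching_of_pp_y_tile matching_of_pp_z_tile)
  moreover have "x_tiles - y_tiles = x_tiles" "y_tiles - x_tiles = y_tiles"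
    "x_tiles \<union> y_tiles - z_tiles = x_tiles \<union> y_tiles" "z_tiles - (x_tiles \<union> y_tiles) = z_tiles"
    using x_tiles_y_tiles_disjoint x_tiles_z_tiles_disjoint y_tiles_z_tiles_disjoint by auto
  ultimately show ?thesis
    unfolding tiles_eq_Bm[symmetric] inj_on_Un
    using times_x_tiles_times_y_tiles_disjoint times_x_tiles_times_z_tiles_disjoint
      times_y_tiles_times_z_tiles_disjoint
    by (simp add: Int_Un_distrib Int_Un_distrib2 image_Un images)
qed

lemma matching_of_pp_mem_matchings: "matching_of_pp \<in> matchings"
proof -
  have im: "matching_of_pp ` Bm \<subseteq> Bm1" using matching_of_pp_in_Bm1 by auto
  have "card (matching_of_pp ` Bm) = card Bm1"
    using card_image[OF inj_on_matching_of_pp] card_Bm_eq_card_Bm1 by simp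
  then have "matching_of_pp ` Bm = Bm1" using im by (intro card_seteq) auto
  then have bij: "bij_betw matching_of_pp Bm Bm1"
    using inj_on_matching_of_pp by (simp add: bij_betw_def)
  have out: "\<forall>x. x \<notin> Bm \<longrightarrow> matching_of_pp x = undefined"
    using tiles_eq_Bm by (auto simp: matching_of_pp_def)
  have st: "\<forall>l \<in> Bm. step_monom (matching_of_pp l) l"
  proof
    fix l assume "l \<in> Bm"
    then have "l \<in> x_tiles \<or> l \<in> y_tiles \<or> l \<in> z_tiles" using tiles_eq_Bm by blast
    then show "step_monom (matching_of_pp l) l"
      unfolding matching_of_pp_def step_monom_iff times_x_def times_y_def times_z_def by auto
  qed
  show ?thesis using bij out st by (simp add: matchings_def)
qed

lemma x_steps_matching_of_pp: "x_steps matching_of_pp = x_tiles"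
proof
  have d: "times_x l \<noteq> times_y l" "times_x l \<noteq> times_z l" for l
    by (simp_all add: times_x_def times_y_def times_z_def)
  show "x_steps matching_of_pp \<subseteq> x_tiles"
  proof
    fix l assume "l \<in> x_steps matching_of_pp"
    then have l: "l \<in> Bm" "matching_of_pp l = times_x l" by (auto simp: x_steps_def)
    then have "l \<in> x_tiles \<or> l \<in> y_tiles \<or> l \<in> z_tiles" using tiles_eq_Bm by blast
    then show "l \<in> x_tiles" using l(2) matching_of_pp_y_tile matching_of_pp_z_tile d by metis
  qed
  show "x_tiles \<subseteq> x_steps matching_of_pp"
    using tiles_eq_Bm matching_of_pp_x_tile unfolding x_steps_def by blast
qed

end
context box
begin

definition diagonal :: "nat \<Rightarrow> (nat \<times> nat) set" where
  "diagonal i = {(u, v). u < a \<and> v < b \<and> b - 1 + u - v = i}"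

definition diagonal_length :: "nat \<Rightarrow> nat" where "diagonal_length i = card (diagonal i)"

lemma finite_diagonal[simp]: "finite (diagonal i)"
  by (rule finite_subset[of _ "{..<a} \<times> {..<b}"]) (auto simp: diagonal_def)

lemma diagonal_shift:
  assumes "u < a" "v < b" "t \<le> min u v"
  shows "(u - t, v - t) \<in> diagonal (b - 1 + u - v)"
  using assms b_pos by (auto simp: diagonal_def)

lemma min_less_diagonal_length:
  assumes "u < a" "v < b"
  shows "min u v + 1 \<le> diagonal_length (b - 1 + u - v)"
proof -
  have "(\<lambda>t. (u - t, v - t)) ` {..min u v} \<subseteq> diagonal (b - 1 + u - v)"
    using diagonal_shift assms by auto
  moreover have "inj_on (\<lambda>t. (u - t, v - t)) {..min u v}"
    by (rule inj_onI) auto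
  ultimately have "card {..min u v} \<le> diagonal_length (b - 1 + u - v)"
    unfolding diagonal_length_def by (metis card_image card_mono finite_diagonal)
  then show ?thesis by simp
qed

lemma exists_diagonal_cell:
  assumes "1 \<le> r" "r \<le> diagonal_length i"
  shows "\<exists>u v. u < a \<and> v < b \<and> b - 1 + u - v = i \<and> min u v + 1 = r"
proof -
  let ?M = "(\<lambda>(u,v). min u v) ` diagonal i"
  have inj: "inj_on (\<lambda>(u,v). min u v) (diagonal i)"
  proof (rule inj_onI)
    fix x y assume "x \<in> diagonal i" "y \<in> diagonal i" "(\<lambda>(u,v). min u v) x = (\<lambda>(u,v). min u v) y"
    then show "x = y"
      using b_pos by (cases x, cases y) (auto simp: diagonal_def min_def split: if_splits)
  qed
  have cM: "card ?M = diagonal_length i" unfolding diagonal_length_def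
    using inj by (rule card_image)
  have dc: "y \<in> ?M" if hx: "x \<in> ?M" and hy: "y \<le> x" for x y
  proof -
    obtain u v where uv: "(u, v) \<in> diagonal i" "x = min u v" using hx by auto
    then have "(u - (x - y), v - (x - y)) \<in> diagonal i"
      using diagonal_shift[of u v "x - y"] by (auto simp: diagonal_def)
    moreover have "min (u - (x - y)) (v - (x - y)) = y" using uv hy by auto
    ultimately show ?thesis by force
  qed
  have "?M = {..<card ?M}" by (rule downward_closed_eq_lessThan) (use dc in auto)
  then have "r - 1 \<in> ?M" using assms cM by auto
  then obtain u v where "(u, v) \<in> diagonal i" "min u v = r - 1" by auto
  then have "u < a \<and> v < b \<and> b - 1 + u - v = i \<and> min u v + 1 = r"
    using assms by (auto simp: diagonal_def)
  then show ?thesis by blast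
qed

end

context box_partition
begin

lemma deg_x_x_tile: "deg_x (x_tile u v) = b - 1 + u - v" by (simp add: x_tile_def)
lemma deg_y_x_tile: "deg_y (x_tile u v) = a - 1 - u + p u v" by (simp add: x_tile_def)

definition tall_cells :: "nat \<Rightarrow> nat \<Rightarrow> (nat \<times> nat) set" where
  "tall_cells i J = {(u, v) \<in> diagonal i. J \<le> a - 1 - u + p u v}"

lemma card_x_tiles_layer_above:
  "card {l \<in> x_tiles. deg_x l = i \<and> J \<le> deg_y l} = card (tall_cells i J)"
proof -
  have "{l \<in> x_tiles. deg_x l = i \<and> J \<le> deg_y l} = (\<lambda>(u, v). x_tile u v) ` tall_cells i J"
  proof (intro equalityI subsetI)
    fix l assume "l \<in> {l \<in> x_tiles. deg_x l = i \<and> J \<le> deg_y l}"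
    then obtain u v where "u < a" "v < b" "l = x_tile u v" "deg_x l = i" "J \<le> deg_y l"
      by (auto simp: x_tiles_def)
    then show "l \<in> (\<lambda>(u, v). x_tile u v) ` tall_cells i J"
      by (intro image_eqI[of _ _ "(u, v)"])
        (auto simp: tall_cells_def diagonal_def deg_x_x_tile deg_y_x_tile)
  qed (auto simp: x_tiles_def tall_cells_def diagonal_def deg_x_x_tile deg_y_x_tile)
  moreover have "inj_on (\<lambda>(u, v). x_tile u v) (tall_cells i J)"
    using x_tile_inj by (auto simp: inj_on_def tall_cells_def diagonal_def)
  ultimately show ?thesis by (simp add: card_image)
qed

lemma x_steps_above_matching_of_pp: "x_steps_above matching_of_pp i J = card (tall_cells i J)"
  unfolding x_steps_above_def x_steps_matching_of_pp by (rule card_x_tiles_layer_above)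

lemma diagonal_prefix_subset_tall_cells:
  assumes "u < a" "v < b" "w < p u v"
  shows "(\<lambda>t. (u - t, v - t)) ` {..min u v} \<subseteq> tall_cells (b - 1 + u - v) (a - u + w)"
proof
  fix x assume "x \<in> (\<lambda>t. (u - t, v - t)) ` {..min u v}"
  then obtain t where t: "t \<le> min u v" "x = (u - t, v - t)" by auto
  have "p u v \<le> p (u - t) v" by (rule p_antimono_u) simp
  also have "\<dots> \<le> p (u - t) (v - t)" by (rule p_antimono_v) simp
  finally have "a - u + w \<le> a - 1 - (u - t) + p (u - t) (v - t)" using assms t by arith
  moreover have "(u - t, v - t) \<in> diagonal (b - 1 + u - v)" using diagonal_shift assms t by blast
  ultimately show "x \<in> tall_cells (b - 1 + u - v) (a - u + w)" using t by (simp add: tall_cells_def)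
qed

lemma tall_cells_subset_diagonal_prefix:
  assumes "u < a" "v < b" "\<not> w < p u v"
  shows "tall_cells (b - 1 + u - v) (a - u + w) \<subseteq> (\<lambda>t. (u - t, v - t)) ` {1..min u v}"
proof
  fix x assume x: "x \<in> tall_cells (b - 1 + u - v) (a - u + w)"
  obtain u' v' where x_eq: "x = (u', v')" by (cases x)
  have h: "u' < a" "v' < b" "b - 1 + u' - v' = b - 1 + u - v" "a - u + w \<le> a - 1 - u' + p u' v'"
    using x unfolding x_eq tall_cells_def diagonal_def by auto
  have d: "u' + v = u + v'" using h assms b_pos by arith
  have "u' < u"
  proof (rule ccontr)
    assume "\<not> u' < u"
    then have "u \<le> u'" "v \<le> v'" using d by arith+
    then have "p u' v' \<le> p u v" using p_antimono_u p_antimono_v le_trans by blast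
    then show False using h(4) assms \<open>u \<le> u'\<close> by arith
  qed
  then have "x = (u - (u - u'), v - (u - u'))" "u - u' \<in> {1..min u v}" using d x_eq by auto
  then show "x \<in> (\<lambda>t. (u - t, v - t)) ` {1..min u v}" by blast
qed

lemma stack_above_matching_of_pp:
  assumes "u < a" "v < b"
  shows "stack_above matching_of_pp u v (a - u + w) \<longleftrightarrow> w < p u v"
proof -
  let ?T = "tall_cells (b - 1 + u - v) (a - u + w)"
  have "finite ?T"
    by (rule finite_subset[of _ "diagonal (b - 1 + u - v)"]) (auto simp: tall_cells_def)
  have "min u v + 1 \<le> card ?T" if "w < p u v"
  proof -
    have "inj_on (\<lambda>t. (u - t, v - t)) {..min u v}" by (rule inj_onI) auto
    then have "card ((\<lambda>t. (u - t, v - t)) ` {..min u v}) = min u v + 1" by (simp add: card_image)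
    then show ?thesis
      using card_mono[OF \<open>finite ?T\<close> diagonal_prefix_subset_tall_cells[OF assms that]] by simp
  qed
  moreover have "card ?T \<le> min u v" if "\<not> w < p u v"
    using card_mono[OF _ tall_cells_subset_diagonal_prefix[OF assms that]]
      card_image_le[of "{1..min u v}" "\<lambda>t. (u - t, v - t)"]
    by simp
  ultimately show ?thesis unfolding stack_above_def x_steps_above_matching_of_pp by fastforce
qed

lemma pp_of_matching_of_pp: "pp_of_matching matching_of_pp = p"
proof (intro ext)
  fix u v
  show "pp_of_matching matching_of_pp u v = p u v"
  proof (cases "u < a \<and> v < b")
    case True
    then have "{w. w < c \<and> stack_above matching_of_pp u v (a - u + w)} = {..<p u v}"
      using stack_above_matching_of_pp p_le_c[of u v] by auto
    then show ?thesis using True by (simp add: pp_of_matching_def)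
  next
    case False
    then have "pp_of_matching matching_of_pp u v = 0" unfolding pp_of_matching_def by auto
    then show ?thesis using p_outside False by simp
  qed
qed

lemma card_x_tiles_layer: "card {l \<in> x_tiles. deg_x l = i} = diagonal_length i"
  using card_x_tiles_layer_above[of i 0] by (simp add: diagonal_length_def tall_cells_def)

end
section \<open>Matchings and plane partitions are in bijection\<close>

context box
begin

lemma empty_pp_mem_box_PP: "(\<lambda>_ _. 0) \<in> box_PP a b c"
  by (simp add: box_PP_def plane_partition_def fits_in_box_def)

lemma forced_x_count_eq_diagonal_length: "forced_x_count i = diagonal_length i"
proof -
  interpret P: box_partition a b c "\<lambda>_ _. 0"
    by (simp add: box_partition_def box_partition_axioms_def box_axioms empty_pp_mem_box_PP)
  interpret M: matching a b c P.matching_of_pp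
    by (rule matching_if_mem_matchings[OF P.matching_of_pp_mem_matchings])
  show ?thesis
    using M.card_x_steps_layer[of i] P.card_x_tiles_layer[of i]
    by (simp add: P.x_steps_matching_of_pp)
qed

end

context matching
begin

lemma card_x_steps_layer_eq_diagonal_length: "card {l \<in> X. deg_x l = i} = diagonal_length i"
  using card_x_steps_layer forced_x_count_eq_diagonal_length by simp

lemma x_steps_above_le_diagonal_length: "N i J \<le> diagonal_length i"
  unfolding card_x_steps_layer_eq_diagonal_length[symmetric] x_steps_above_def
  by (rule card_mono) auto

text \<open>Every stack reaches the floor of the box and stays below its ceiling: propagate from
  the corner cell, where all \<open>x\<close>-steps of the layer are counted, resp. towards the corner
  \<open>(0, 0)\<close>, where the \<open>y\<close>-degree would exceed \<open>a + c - 1\<close>.\<close>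

lemma stack_above_floor:
  assumes "u < a" "v < b"
  shows "stack_above phi u v (a - 1 - u)"
proof -
  have corner: "stack_above phi (a - 1) (b - 1) 0"
  proof -
    have "N (a - 1) 0 = diagonal_length (a - 1)"
      using card_x_steps_layer_eq_diagonal_length[of "a - 1"] by (simp add: x_steps_above_def)
    moreover have "min (a - 1) (b - 1) + 1 \<le> diagonal_length (b - 1 + (a - 1) - (b - 1))"
      using min_less_diagonal_length[of "a - 1" "b - 1"] a_pos b_pos by simp
    ultimately show ?thesis unfolding stack_above_def using a_pos b_pos by simp
  qed
  have along_u: "stack_above phi (a - 1 - t) (b - 1) t" if "t \<le> a - 1" for t
    using that
  proof (induction t)
    case (Suc t)
    then have "stack_above phi (Suc (a - 1 - Suc t)) (b - 1) t"
      using Suc_diff_Suc[of t "a - 1"] by simp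
    then show ?case
      using stack_above_Suc_u[of "a - 1 - Suc t" "b - 1" t] Suc.prems a_pos b_pos by simp
  qed (use corner in simp)
  have along_v: "stack_above phi u (b - 1 - s) (a - 1 - u)" if "s \<le> b - 1" for s
    using that
  proof (induction s)
    case (Suc s)
    then have "stack_above phi u (Suc (b - 1 - Suc s)) (a - 1 - u)"
      using Suc_diff_Suc[of s "b - 1"] by simp
    then show ?case
      using stack_above_Suc_v[of u "b - 1 - Suc s" "a - 1 - u"] Suc.prems assms b_pos by simp
  qed (use along_u[of "a - 1 - u"] assms in simp)
  show ?thesis using along_v[of "b - 1 - v"] assms by simp
qed

lemma not_stack_above_ceiling:
  assumes "u < a" "v < b"
  shows "\<not> stack_above phi u v (a - u + c)"
proof
  assume h: "stack_above phi u v (a - u + c)"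
  have along_v: "stack_above phi u (v - s) (a - u + c)" if "s \<le> v" for s
    using that
  proof (induction s)
    case (Suc s)
    then have "stack_above phi u (Suc (v - Suc s)) (a - u + c)" using Suc_diff_Suc[of s v] by simp
    then show ?case using stack_above_Suc_v[of u "v - Suc s" "a - u + c"] Suc.prems assms by simp
  qed (use h in simp)
  have along_u: "stack_above phi (u - t) 0 (a - u + c + t)" if "t \<le> u" for t
    using that
  proof (induction t)
    case (Suc t)
    then have "stack_above phi (Suc (u - Suc t)) 0 (a - u + c + t)"
      using Suc_diff_Suc[of t u] by simp
    then show ?case
      using stack_above_Suc_u[of "u - Suc t" 0 "a - u + c + t"] Suc.prems assms b_pos by simp
  qed (use along_v[of v] in simp)
  have "stack_above phi 0 0 (a + c)" using along_u[of u] assms by simp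
  then have "1 \<le> N (b - 1) (a + c)" by (simp add: stack_above_def)
  moreover have "{l \<in> X. deg_x l = b - 1 \<and> a + c \<le> deg_y l} = {}"
    using X_subset_Bm by (auto simp: mem_Bm_iff)
  then have "N (b - 1) (a + c) = 0" by (simp add: x_steps_above_def)
  ultimately show False by simp
qed

lemma stack_heights_eq_lessThan:
  assumes "u < a" "v < b"
  shows "{w. w < c \<and> stack_above phi u v (a - u + w)} = {..<pp_of_matching phi u v}"
proof -
  have "{w. w < c \<and> stack_above phi u v (a - u + w)}
      = {..<card {w. w < c \<and> stack_above phi u v (a - u + w)}}"
  proof (rule downward_closed_eq_lessThan)
    fix x y assume "x \<in> {w. w < c \<and> stack_above phi u v (a - u + w)}" "y \<le> x"
    then show "y \<in> {w. w < c \<and> stack_above phi u v (a - u + w)}"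
      using stack_above_antimono[of "a - u + y" "a - u + x"] by auto
  qed simp
  then show ?thesis using assms by (simp add: pp_of_matching_def)
qed

end

context box
begin

lemma mem_x_steps_iff:
  assumes "l \<in> Bm"
  shows "l \<in> x_steps f \<longleftrightarrow>
    x_steps_above f (deg_x l) (deg_y l) = Suc (x_steps_above f (deg_x l) (Suc (deg_y l)))"
proof -
  let ?T = "{l' \<in> x_steps f. deg_x l' = deg_x l \<and> Suc (deg_y l) \<le> deg_y l'}"
  let ?E = "{l' \<in> x_steps f. deg_x l' = deg_x l \<and> deg_y l' = deg_y l}"
  have "{l' \<in> x_steps f. deg_x l' = deg_x l \<and> deg_y l \<le> deg_y l'} = ?T \<union> ?E" by auto
  moreover have "finite ?T" "finite ?E" by (auto intro: finite_subset[of _ Bm] simp: x_steps_def)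
  ultimately have card_split: "x_steps_above f (deg_x l) (deg_y l) = card ?T + card ?E"
    unfolding x_steps_above_def by (simp add: card_Un_disjoint disjoint_iff)
  have "?E \<subseteq> {l}"
  proof
    fix l' assume "l' \<in> ?E"
    then have "l' \<in> Bm" "deg_x l' = deg_x l" "deg_y l' = deg_y l" by (auto simp: x_steps_def)
    then show "l' \<in> {l}" using assms by (cases l, cases l') (auto simp: mem_Bm_iff)
  qed
  then have "?E = (if l \<in> x_steps f then {l} else {})" by auto
  then show ?thesis using card_split by (simp add: x_steps_above_def)
qed

lemma stack_above_eq_if_pp_of_matching_eq:
  assumes f: "f \<in> matchings" and g: "g \<in> matchings"
    and same_pp: "pp_of_matching f = pp_of_matching g" and uv: "u < a" "v < b"
  shows "stack_above f u v J \<longleftrightarrow> stack_above g u v J"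
proof -
  interpret F: matching a b c f by (rule matching_if_mem_matchings[OF f])
  interpret G: matching a b c g by (rule matching_if_mem_matchings[OF g])
  consider "J \<le> a - 1 - u" | "a - u + c \<le> J" | "a - u \<le> J" "J < a - u + c" by linarith
  then show ?thesis
  proof cases
    case 1
    then show ?thesis
      using F.stack_above_floor[OF uv] G.stack_above_floor[OF uv] stack_above_antimono by blast
  next
    case 2
    then show ?thesis
      using F.not_stack_above_ceiling[OF uv] G.not_stack_above_ceiling[OF uv] stack_above_antimono
      by blast
  next
    case 3
    define w where "w = J - (a - u)"
    have J: "J = a - u + w" and "w < c" using 3 by (simp_all add: w_def)
    have "stack_above h u v (a - u + w) \<longleftrightarrow> w < pp_of_matching h u v"
      if "{w. w < c \<and> stack_above h u v (a - u + w)} = {..<pp_of_matching h u v}" for h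
      using that \<open>w < c\<close> by (metis (no_types, lifting) lessThan_iff mem_Collect_eq)
    then show ?thesis
      unfolding J
        using F.stack_heights_eq_lessThan[OF uv] G.stack_heights_eq_lessThan[OF uv] same_pp
      by simp
  qed
qed

lemma x_steps_above_eq_if_pp_of_matching_eq:
  assumes f: "f \<in> matchings" and g: "g \<in> matchings"
    and same_pp: "pp_of_matching f = pp_of_matching g"
  shows "x_steps_above f i J = x_steps_above g i J"
proof -
  interpret F: matching a b c f by (rule matching_if_mem_matchings[OF f])
  interpret G: matching a b c g by (rule matching_if_mem_matchings[OF g])
  have key: "r \<le> x_steps_above f i J \<longleftrightarrow> r \<le> x_steps_above g i J" if r_pos: "1 \<le> r" for r
  proof (cases "r \<le> diagonal_length i")
    case True
    then obtain u v where uv: "u < a" "v < b" "b - 1 + u - v = i" "min u v + 1 = r"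
      using exists_diagonal_cell[OF r_pos True] by blast
    then show ?thesis
      using stack_above_eq_if_pp_of_matching_eq[OF f g same_pp uv(1,2)]
      by (simp add: stack_above_def)
  next
    case False
    then show ?thesis
      using F.x_steps_above_le_diagonal_length[of i J] G.x_steps_above_le_diagonal_length[of i J]
      by simp
  qed
  have "x_steps_above f i J \<le> x_steps_above g i J"
    using key[of "x_steps_above f i J"] by (cases "x_steps_above f i J") auto
  moreover have "x_steps_above g i J \<le> x_steps_above f i J"
    using key[of "x_steps_above g i J"] by (cases "x_steps_above g i J") auto
  ultimately show ?thesis by (rule le_antisym)
qed

lemma bij_betw_pp_of_matching: "bij_betw pp_of_matching matchings (box_PP a b c)"
proof (rule bij_betw_imageI)
  show "inj_on pp_of_matching matchings"
  proof (rule inj_onI)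
    fix f g assume f: "f \<in> matchings" and g: "g \<in> matchings"
      and same_pp: "pp_of_matching f = pp_of_matching g"
    have "l \<in> x_steps f \<longleftrightarrow> l \<in> x_steps g" for l
    proof (cases "l \<in> Bm")
      case True
      then show ?thesis
        using mem_x_steps_iff[OF True, of f] mem_x_steps_iff[OF True, of g]
          x_steps_above_eq_if_pp_of_matching_eq[OF f g same_pp]
        by simp
    qed (simp add: x_steps_def)
    then have "x_steps f = x_steps g" by blast
    then show "f = g" by (rule matching_eq_if_x_steps_eq[OF f g])
  qed
  show "pp_of_matching ` matchings = box_PP a b c"
  proof
    show "pp_of_matching ` matchings \<subseteq> box_PP a b c"
      using matching.pp_of_matching_in_box_PP matching_if_mem_matchings by blast
    show "box_PP a b c \<subseteq> pp_of_matching ` matchings"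
    proof
      fix p assume p: "p \<in> box_PP a b c"
      interpret P: box_partition a b c p
        by (simp add: box_partition_def box_partition_axioms_def box_axioms p)
      show "p \<in> pp_of_matching ` matchings"
        using P.pp_of_matching_of_pp P.matching_of_pp_mem_matchings by (metis image_eqI)
    qed
  qed
qed

end

section \<open>All matchings have the same number of inversions\<close>

context box
begin

definition inversions :: "(monom \<Rightarrow> monom) \<Rightarrow> (monom \<times> monom) set" where
  "inversions f = {(l, l'). l \<in> Bm \<and> l' \<in> Bm \<and> l < l' \<and> f l' < f l}"

definition min_deg_y :: "nat \<Rightarrow> nat" where "min_deg_y i = a - 1 - i"
definition max_deg_y1 :: "nat \<Rightarrow> nat" where "max_deg_y1 i = min (a + c - 1) (a + b + c - 1 - i)"
definition non_x_count :: "nat \<Rightarrow> nat" where "non_x_count i = card (layer i) - forced_x_count i"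

definition inversion_count :: int where
  "inversion_count = (\<Sum>l\<in>Bm. int (deg_y l)) - (\<Sum>l\<in>Bm1. int (deg_y l))
     + (\<Sum>i<a+b. int (non_x_count i) *
          (int (max_deg_y1 i) - int (min_deg_y i) - int (non_x_count i) + 1))"

lemma card_layer_below:
  assumes "l' \<in> layer i"
  shows "min_deg_y i \<le> deg_y l'"
    and "card {l \<in> layer i. deg_y l < deg_y l'} = deg_y l' - min_deg_y i"
proof -
  obtain j k where l': "l' = (i, j, k)" "i < a + b" "j < a + c" "k < b + c"
    "i + j + k = a + b + c - 2"
    using assms by (cases l') (auto simp: layer_def mem_Bm_iff)
  then show "min_deg_y i \<le> deg_y l'" by (simp add: min_deg_y_def)
  have "{l \<in> layer i. deg_y l < deg_y l'}
      = (\<lambda>j'. (i, j', a + b + c - 2 - i - j')) ` {min_deg_y i..<j}"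
    using l' by (auto simp: layer_def mem_Bm_iff min_deg_y_def image_iff)
  moreover have "inj_on (\<lambda>j'. (i, j', a + b + c - 2 - i - j')) {min_deg_y i..<j}"
    by (auto simp: inj_on_def)
  ultimately show "card {l \<in> layer i. deg_y l < deg_y l'} = deg_y l' - min_deg_y i"
    using l' by (simp add: card_image)
qed

lemma card_layer1_above:
  assumes "mu' \<in> layer1 i"
  shows "deg_y mu' \<le> max_deg_y1 i"
    and "card {mu \<in> layer1 i. deg_y mu' < deg_y mu} = max_deg_y1 i - deg_y mu'"
proof -
  obtain j k where mu': "mu' = (i, j, k)" "i < a + b" "j < a + c" "k < b + c"
    "i + j + k = a + b + c - 1"
    using assms by (cases mu') (auto simp: layer1_def mem_Bm1_iff)
  then show "deg_y mu' \<le> max_deg_y1 i" by (simp add: max_deg_y1_def) arith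
  have "{mu \<in> layer1 i. deg_y mu' < deg_y mu}
      = (\<lambda>j'. (i, j', a + b + c - 1 - i - j')) ` {j<..max_deg_y1 i}"
    using mu' a_pos b_pos c_pos by (auto simp: layer1_def mem_Bm1_iff max_deg_y1_def image_iff)
  moreover have "inj_on (\<lambda>j'. (i, j', a + b + c - 1 - i - j')) {j<..max_deg_y1 i}"
    by (auto simp: inj_on_def)
  ultimately show "card {mu \<in> layer1 i. deg_y mu' < deg_y mu} = max_deg_y1 i - deg_y mu'"
    using mu' by (simp add: card_image)
qed

end

context matching
begin

abbreviation "NX \<equiv> Bm - X"

lemma deg_x_phi_NX: "l \<in> NX \<Longrightarrow> deg_x (phi l) = deg_x l"
  using deg_x_phi by simp

lemma inversions_eq:
  "inversions phi = {(l, l'). l \<in> X \<and> l' \<in> NX \<and>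
     (deg_x l = deg_x l' \<and> deg_y l < deg_y l' \<or>
      deg_x l + 1 = deg_x l' \<and> deg_y (phi l') < deg_y l)}" (is "_ = ?R")
proof -
  have key: "l < l' \<and> phi l' < phi l \<longleftrightarrow> l \<in> X \<and> l' \<notin> X \<and>
      (deg_x l = deg_x l' \<and> deg_y l < deg_y l' \<or> deg_x l + 1 = deg_x l' \<and> deg_y (phi l') < deg_y l)"
    if "l \<in> Bm" "l' \<in> Bm" for l l'
  proof -
    have "step_monom (phi l) l" "step_monom (phi l') l'"
      using phi_matching that by (auto simp: matchings_def)
    then show ?thesis
      using step_inversion_iff[of l l' "phi l" "phi l'"] that by (simp add: mem_Bm_iff x_steps_def)
  qed
  show ?thesis unfolding set_eq_iff
  proof
    fix z :: "monom \<times> monom"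
    obtain l l' where z: "z = (l, l')" by (cases z)
    show "z \<in> inversions phi \<longleftrightarrow> z \<in> ?R"
      unfolding z inversions_def mem_Collect_eq case_prod_conv
      using key[of l l'] X_subset_Bm by blast
  qed
qed

definition inv_same_layer :: "monom \<Rightarrow> monom set" where
  "inv_same_layer l' = {l \<in> X. deg_x l = deg_x l' \<and> deg_y l < deg_y l'}"
definition inv_prev_layer :: "monom \<Rightarrow> monom set" where
  "inv_prev_layer l' = {l \<in> X. deg_x l + 1 = deg_x l' \<and> deg_y (phi l') < deg_y l}"
definition non_x_below :: "monom \<Rightarrow> monom set" where
  "non_x_below l' = {l \<in> NX. deg_x l = deg_x l' \<and> deg_y l < deg_y l'}"
definition non_x_image_above :: "monom \<Rightarrow> monom set" where
  "non_x_image_above l' = {l \<in> NX. deg_x l = deg_x l' \<and> deg_y (phi l') < deg_y (phi l)}"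

lemma finite_inversion_sets [simp]:
  "finite (inv_same_layer l')" "finite (inv_prev_layer l')"
  "finite (non_x_below l')" "finite (non_x_image_above l')"
  by (auto simp: inv_same_layer_def inv_prev_layer_def non_x_below_def non_x_image_above_def)

lemma card_inversions_eq_sum:
  "card (inversions phi) = (\<Sum>l'\<in>NX. card (inv_same_layer l') + card (inv_prev_layer l'))"
proof -
  let ?S = "SIGMA l':NX. inv_same_layer l' \<union> inv_prev_layer l'"
  have "inversions phi = (\<lambda>(l', l). (l, l')) ` ?S"
    unfolding inversions_eq inv_same_layer_def inv_prev_layer_def by auto
  moreover have "inj_on (\<lambda>(l', l). (l, l')) ?S" by (rule inj_onI) auto
  ultimately have "card (inversions phi) = card ?S" by (simp add: card_image)
  also have "\<dots> = (\<Sum>l'\<in>NX. card (inv_same_layer l' \<union> inv_prev_layer l'))"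
    by (rule card_SigmaI) auto
  also have "\<dots> = (\<Sum>l'\<in>NX. card (inv_same_layer l') + card (inv_prev_layer l'))"
    by (intro sum.cong refl card_Un_disjoint) (auto simp: inv_same_layer_def inv_prev_layer_def)
  finally show ?thesis .
qed

lemma card_inv_same_layer:
  assumes "l' \<in> NX"
  shows "card (inv_same_layer l') + card (non_x_below l') = deg_y l' - min_deg_y (deg_x l')"
proof -
  have "l' \<in> layer (deg_x l')" using assms by (simp add: layer_def)
  moreover have "{l \<in> layer (deg_x l'). deg_y l < deg_y l'} = inv_same_layer l' \<union> non_x_below l'"
    using X_subset_Bm by (auto simp: inv_same_layer_def non_x_below_def layer_def)
  ultimately have "deg_y l' - min_deg_y (deg_x l') = card (inv_same_layer l' \<union> non_x_below l')"
    using card_layer_below(2) by metis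
  also have "\<dots> = card (inv_same_layer l') + card (non_x_below l')"
    by (intro card_Un_disjoint) (auto simp: inv_same_layer_def non_x_below_def)
  finally show ?thesis by simp
qed

lemma layer1_above_phi_eq:
  assumes "l' \<in> NX"
  shows "{mu \<in> layer1 (deg_x l'). deg_y (phi l') < deg_y mu}
    = phi ` (inv_prev_layer l' \<union> non_x_image_above l')"
proof
  let ?i = "deg_x l'"
  show "{mu \<in> layer1 ?i. deg_y (phi l') < deg_y mu}
      \<subseteq> phi ` (inv_prev_layer l' \<union> non_x_image_above l')"
  proof
    fix mu assume mu: "mu \<in> {mu \<in> layer1 ?i. deg_y (phi l') < deg_y mu}"
    then obtain l where "l \<in> layer ?i - X \<or> l \<in> X \<and> deg_x l + 1 = ?i" "mu = phi l"
      using layer1_eq_image[of ?i] by auto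
    then show "mu \<in> phi ` (inv_prev_layer l' \<union> non_x_image_above l')"
      using mu deg_y_phi_x_step[of l]
      by (auto simp: inv_prev_layer_def non_x_image_above_def layer_def)
  qed
  show "phi ` (inv_prev_layer l' \<union> non_x_image_above l')
      \<subseteq> {mu \<in> layer1 ?i. deg_y (phi l') < deg_y mu}"
  proof
    fix mu assume "mu \<in> phi ` (inv_prev_layer l' \<union> non_x_image_above l')"
    then obtain l where l: "l \<in> inv_prev_layer l' \<union> non_x_image_above l'" "mu = phi l" by blast
    then have "l \<in> Bm" using X_subset_Bm by (auto simp: inv_prev_layer_def non_x_image_above_def)
    then show "mu \<in> {mu \<in> layer1 ?i. deg_y (phi l') < deg_y mu}"
      using l phi_in_Bm1[of l] deg_x_phi[of l] deg_y_phi_x_step[of l]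
      by (auto simp: layer1_def inv_prev_layer_def non_x_image_above_def)
  qed
qed

lemma card_inv_prev_layer:
  assumes "l' \<in> NX"
  shows "card (inv_prev_layer l') + card (non_x_image_above l')
    = max_deg_y1 (deg_x l') - deg_y (phi l')"
proof -
  have "phi l' \<in> layer1 (deg_x l')" using assms phi_in_Bm1 deg_x_phi_NX by (simp add: layer1_def)
  from card_layer1_above(2)[OF this]
  have "max_deg_y1 (deg_x l') - deg_y (phi l')
      = card (phi ` (inv_prev_layer l' \<union> non_x_image_above l'))"
    using layer1_above_phi_eq[OF assms] by simp
  also have "\<dots> = card (inv_prev_layer l' \<union> non_x_image_above l')"
    using X_subset_Bm
    by (intro card_image inj_on_subset[OF phi_inj])
      (auto simp: inv_prev_layer_def non_x_image_above_def)
  also have "\<dots> = card (inv_prev_layer l') + card (non_x_image_above l')"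
    by (intro card_Un_disjoint) (auto simp: inv_prev_layer_def non_x_image_above_def)
  finally show ?thesis by simp
qed

lemma deg_y_inj_on_layer:
  assumes "l \<in> Bm" "l' \<in> Bm" "deg_x l = deg_x l'" "deg_y l = deg_y l'"
  shows "l = l'"
  using assms by (cases l, cases l') (auto simp: mem_Bm_iff)

lemma deg_y_phi_inj_on_layer:
  assumes "l \<in> NX" "l' \<in> NX" "deg_x l = deg_x l'" "deg_y (phi l) = deg_y (phi l')"
  shows "l = l'"
proof -
  have "deg_x (phi l) = deg_x (phi l')" using assms deg_x_phi_NX by simp
  moreover have "phi l \<in> Bm1" "phi l' \<in> Bm1" using assms phi_in_Bm1 by auto
  ultimately have "phi l = phi l'"
    using assms(4) by (cases "phi l", cases "phi l'") (auto simp: mem_Bm1_iff)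
  then show ?thesis using phi_inj assms by (auto dest: inj_onD)
qed

lemma card_same_layer_NX: "card {l \<in> NX. deg_x l = i} = non_x_count i"
proof -
  have "{l \<in> NX. deg_x l = i} = layer i - X" by (auto simp: layer_def)
  then show ?thesis using card_layer_minus_X by (simp add: non_x_count_def)
qed

lemma sum_card_non_x:
  "(\<Sum>l'\<in>NX. card (non_x_below l') + card (non_x_image_above l'))
    = (\<Sum>l'\<in>NX. non_x_count (deg_x l') - 1)"
proof -
  have "2 * (\<Sum>l'\<in>NX. card (non_x_below l')) = (\<Sum>l'\<in>NX. card {l \<in> NX. deg_x l = deg_x l'} - 1)"
    unfolding non_x_below_def
    by (rule sum_card_below_in_classes(1)) (simp, metis DiffD1 deg_y_inj_on_layer)
  moreover have "2 * (\<Sum>l'\<in>NX. card (non_x_image_above l'))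
      = (\<Sum>l'\<in>NX. card {l \<in> NX. deg_x l = deg_x l'} - 1)"
    unfolding non_x_image_above_def
    by (rule sum_card_below_in_classes(2)) (simp, metis deg_y_phi_inj_on_layer)
  ultimately show ?thesis unfolding card_same_layer_NX by (simp add: sum.distrib)
qed

lemma non_x_count_pos:
  assumes "l' \<in> NX"
  shows "1 \<le> non_x_count (deg_x l')"
proof -
  have "{l \<in> NX. deg_x l = deg_x l'} \<noteq> {}" using assms by blast
  then show ?thesis unfolding card_same_layer_NX[symmetric] by (simp add: Suc_le_eq card_gt_0_iff)
qed

lemma sum_deg_y_NX:
  "(\<Sum>l'\<in>NX. int (deg_y l') - int (deg_y (phi l')))
    = (\<Sum>l\<in>Bm. int (deg_y l)) - (\<Sum>l\<in>Bm1. int (deg_y l))"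
proof -
  have "(\<Sum>l\<in>Bm. int (deg_y l) - int (deg_y (phi l)))
      = (\<Sum>l'\<in>NX. int (deg_y l') - int (deg_y (phi l')))
        + (\<Sum>l\<in>X. int (deg_y l) - int (deg_y (phi l)))"
    using X_subset_Bm by (intro sum.subset_diff) auto
  moreover have "(\<Sum>l\<in>X. int (deg_y l) - int (deg_y (phi l))) = 0"
    using deg_y_phi_x_step by (intro sum.neutral) simp
  moreover have "(\<Sum>l\<in>Bm. int (deg_y (phi l))) = (\<Sum>l\<in>Bm1. int (deg_y l))"
    using phi_bij by (rule sum.reindex_bij_betw)
  ultimately show ?thesis by (simp add: sum_subtractf)
qed

lemma sum_NX_by_layers: "(\<Sum>l'\<in>NX. G (deg_x l')) = (\<Sum>i<a+b. int (non_x_count i) * G i)"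
proof -
  have "(\<Sum>l'\<in>NX. G (deg_x l')) = (\<Sum>i<a+b. (\<Sum>l'\<in>{l \<in> NX. deg_x l = i}. G (deg_x l')))"
    by (rule sum.group[symmetric]) (auto simp: mem_Bm_iff)
  also have "\<dots> = (\<Sum>i<a+b. int (non_x_count i) * G i)"
    by (intro sum.cong refl) (simp add: card_same_layer_NX[symmetric])
  finally show ?thesis .
qed

text \<open>A non-\<open>x\<close>-step \<open>l'\<close> of layer \<open>i\<close> is the larger element of an inversion exactly with
  the \<open>x\<close>-steps of layer \<open>i\<close> below it and the \<open>x\<close>-steps of layer \<open>i - 1\<close> whose images have
  larger \<open>y\<close>-degree than \<open>\<phi> l'\<close>. Adding the non-\<open>x\<close>-steps in the same positions gives
  intervals of \<open>y\<close>-degrees (lemmas \<open>card_inv_same_layer\<close>, \<open>card_inv_prev_layer\<close>), and the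
  added pairs make up \<open>t (t - 1)\<close> for each layer with \<open>t\<close> non-\<open>x\<close>-steps.\<close>

lemma card_inversions: "int (card (inversions phi)) = inversion_count"
proof -
  let ?G = "\<lambda>i. int (max_deg_y1 i) - int (min_deg_y i) - int (non_x_count i) + 1"
  let ?added = "\<lambda>l'. card (non_x_below l') + card (non_x_image_above l')"
  have per_step: "int (card (inv_same_layer l') + card (inv_prev_layer l'))
      = (int (deg_y l') - int (deg_y (phi l')) + ?G (deg_x l'))
        + (int (non_x_count (deg_x l') - 1) - int (?added l'))"
    if l': "l' \<in> NX" for l'
  proof -
    have "l' \<in> layer (deg_x l')" "phi l' \<in> layer1 (deg_x l')"
      using l' phi_in_Bm1 deg_x_phi_NX by (auto simp: layer_def layer1_def)
    then have "min_deg_y (deg_x l') \<le> deg_y l'" "deg_y (phi l') \<le> max_deg_y1 (deg_x l')"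
      using card_layer_below(1) card_layer1_above(1) by blast+
    then show ?thesis
      using card_inv_same_layer[OF l'] card_inv_prev_layer[OF l'] non_x_count_pos[OF l'] by simp
  qed
  have "int (card (inversions phi))
      = (\<Sum>l'\<in>NX. int (card (inv_same_layer l') + card (inv_prev_layer l')))"
    unfolding card_inversions_eq_sum by simp
  also have "\<dots> = (\<Sum>l'\<in>NX. (int (deg_y l') - int (deg_y (phi l')) + ?G (deg_x l'))
      + (int (non_x_count (deg_x l') - 1) - int (?added l')))"
    using per_step by (rule sum.cong[OF refl])
  also have "\<dots> = (\<Sum>l'\<in>NX. int (deg_y l') - int (deg_y (phi l')) + ?G (deg_x l'))
      + ((\<Sum>l'\<in>NX. int (non_x_count (deg_x l') - 1)) - (\<Sum>l'\<in>NX. int (?added l')))"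
    by (simp add: sum.distrib sum_subtractf)
  also have "(\<Sum>l'\<in>NX. int (non_x_count (deg_x l') - 1)) - (\<Sum>l'\<in>NX. int (?added l')) = 0"
    unfolding of_nat_sum[symmetric] sum_card_non_x by simp
  finally have "int (card (inversions phi))
      = (\<Sum>l'\<in>NX. int (deg_y l') - int (deg_y (phi l'))) + (\<Sum>l'\<in>NX. ?G (deg_x l'))"
    by (simp add: sum.distrib)
  then show ?thesis unfolding sum_deg_y_NX sum_NX_by_layers[of ?G] inversion_count_def .
qed

end
section \<open>The determinant\<close>

context box
begin

definition "dim_B = card Bm"
definition "col_monoms = sorted_list_of_set Bm"
definition "row_monoms = sorted_list_of_set Bm1"
definition "col_index = the_inv_into {..<dim_B} (nth col_monoms)"
definition "row_index = the_inv_into {..<dim_B} (nth row_monoms)"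

abbreviation "perms \<equiv> {s. s permutes {0..<dim_B}}"

lemma length_col_monoms: "length col_monoms = dim_B"
  by (simp add: col_monoms_def dim_B_def)
lemma length_row_monoms: "length row_monoms = dim_B"
  by (simp add: row_monoms_def dim_B_def card_Bm_eq_card_Bm1)

lemma bij_betw_nth_col_monoms: "bij_betw (nth col_monoms) {..<dim_B} Bm"
  by (rule bij_betw_nth) (auto simp: col_monoms_def dim_B_def)
lemma bij_betw_nth_row_monoms: "bij_betw (nth row_monoms) {..<dim_B} Bm1"
  by (rule bij_betw_nth) (auto simp: row_monoms_def dim_B_def card_Bm_eq_card_Bm1)

lemma bij_betw_col_index: "bij_betw col_index Bm {..<dim_B}"
  unfolding col_index_def by (rule bij_betw_the_inv_into[OF bij_betw_nth_col_monoms])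
lemma bij_betw_row_index: "bij_betw row_index Bm1 {..<dim_B}"
  unfolding row_index_def by (rule bij_betw_the_inv_into[OF bij_betw_nth_row_monoms])

lemma col_monoms_nth_col_index: "l \<in> Bm \<Longrightarrow> col_monoms ! (col_index l) = l"
  unfolding col_index_def by (rule f_the_inv_into_f_bij_betw[OF bij_betw_nth_col_monoms])
lemma row_monoms_nth_row_index: "mu \<in> Bm1 \<Longrightarrow> row_monoms ! (row_index mu) = mu"
  unfolding row_index_def by (rule f_the_inv_into_f_bij_betw[OF bij_betw_nth_row_monoms])
lemma col_index_nth_col_monoms: "k < dim_B \<Longrightarrow> col_index (col_monoms ! k) = k"
  unfolding col_index_def
  using bij_betw_nth_col_monoms by (auto intro: the_inv_into_f_f simp: bij_betw_def)
lemma col_index_less: "l \<in> Bm \<Longrightarrow> col_index l < dim_B"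
  using bij_betw_col_index by (auto simp: bij_betw_def)

lemma col_monoms_nth_less_iff:
  "k < dim_B \<Longrightarrow> k' < dim_B \<Longrightarrow> col_monoms ! k < col_monoms ! k' \<longleftrightarrow> k < k'"
  unfolding col_monoms_def dim_B_def by (rule sorted_list_of_set_nth_less_iff) auto
lemma row_monoms_nth_less_iff:
  "k < dim_B \<Longrightarrow> k' < dim_B \<Longrightarrow> row_monoms ! k < row_monoms ! k' \<longleftrightarrow> k < k'"
  unfolding row_monoms_def dim_B_def card_Bm_eq_card_Bm1
  by (rule sorted_list_of_set_nth_less_iff) auto

lemma bij_betw_permutes: "s \<in> perms \<Longrightarrow> bij_betw s {..<dim_B} {..<dim_B}"
  using permutes_imp_bij[of s "{0..<dim_B}"] by (simp add: atLeast0LessThan)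

definition "bijections = {f. bij_betw f Bm Bm1 \<and> (\<forall>x. x \<notin> Bm \<longrightarrow> f x = undefined)}"

definition perm_term :: "(monom \<Rightarrow> monom) \<Rightarrow> int" where
  "perm_term f = (\<Prod>l\<in>Bm. U_entry (f l) l)"

lemma matchings_subset_bijections: "matchings \<subseteq> bijections"
  by (auto simp: matchings_def bijections_def)

lemma finite_bijections: "finite bijections"
proof -
  have "bijections \<subseteq> (\<Pi>\<^sub>E l\<in>Bm. Bm1)"
    by (auto simp: bijections_def bij_betw_def PiE_def extensional_def)
  moreover have "finite (\<Pi>\<^sub>E l\<in>Bm. Bm1)" by (rule finite_PiE) auto
  ultimately show ?thesis by (rule finite_subset)
qed

lemma perm_term_eq: "perm_term f = (if f \<in> matchings then 1 else 0)" if "f \<in> bijections"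
  using that by (simp add: perm_term_def prod_U_entry_eq matchings_def bijections_def)

lemma U_perm_eq_card_matchings: "U_perm a b c = int (card matchings)"
proof -
  have "U_perm a b c = (\<Sum>f\<in>bijections. perm_term f)"
    unfolding U_perm_def Let_def perm_term_def bijections_def Bm_def Bm1_def m_def by simp
  also have "\<dots> = (\<Sum>f\<in>bijections. if f \<in> matchings then 1 else 0)"
    by (rule sum.cong) (simp_all add: perm_term_eq)
  also have "\<dots> = int (card (bijections \<inter> matchings))"
    using finite_bijections by (simp add: sum.If_cases)
  also have "bijections \<inter> matchings = matchings" using matchings_subset_bijections by blast
  finally show ?thesis .
qed

lemma det_U_mat_eq_sum:
  "det (U_mat a b c)
    = (\<Sum>s\<in>perms. of_int (sign s) * (\<Prod>i=0..<dim_B. U_entry (row_monoms ! i) (col_monoms ! s i)))"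
proof -
  have U: "U_mat a b c = mat dim_B dim_B (\<lambda>(p, q). U_entry (row_monoms ! p) (col_monoms ! q))"
    unfolding U_mat_def Let_def using length_col_monoms length_row_monoms
    by (simp add: col_monoms_def row_monoms_def Bm_def Bm1_def m_def)
  have "det (U_mat a b c) = (\<Sum>s\<in>perms. signof s * (\<Prod>i=0..<dim_B. U_mat a b c $$ (i, s i)))"
    unfolding det_def U by simp
  also have "\<dots>
      = (\<Sum>s\<in>perms. of_int (sign s) * (\<Prod>i=0..<dim_B. U_entry (row_monoms ! i) (col_monoms ! s i)))"
  proof (intro sum.cong refl arg_cong2[where f = "(*)"] prod.cong)
    fix s i assume "s \<in> perms" "i \<in> {0..<dim_B}"
    then show "U_mat a b c $$ (i, s i) = U_entry (row_monoms ! i) (col_monoms ! s i)"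
      using permutes_in_image[of s "{0..<dim_B}" i] by (simp add: U)
  qed
  finally show ?thesis .
qed

text \<open>The term of \<open>det\<close> indexed by \<open>s\<close> multiplies the entries in positions \<open>(i, s i)\<close>;
  it belongs to the bijection sending the column monomial \<open>col_monoms ! s i\<close> to the row
  monomial \<open>row_monoms ! i\<close>.\<close>

definition bij_of_perm :: "(nat \<Rightarrow> nat) \<Rightarrow> monom \<Rightarrow> monom" where
  "bij_of_perm s l =
     (if l \<in> Bm then row_monoms ! Hilbert_Choice.inv s (col_index l) else undefined)"

lemma bij_of_perm_mem_bijections: "bij_of_perm s \<in> bijections" if s: "s \<in> perms"
proof -
  have "Hilbert_Choice.inv s \<in> perms" using s by (simp add: permutes_inv)
  then have "bij_betw (nth row_monoms \<circ> (Hilbert_Choice.inv s \<circ> col_index)) Bm Bm1"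
    by (intro bij_betw_trans[OF bij_betw_trans[OF bij_betw_col_index bij_betw_permutes]
          bij_betw_nth_row_monoms])
  moreover have
    "\<And>l. l \<in> Bm \<Longrightarrow> (nth row_monoms \<circ> (Hilbert_Choice.inv s \<circ> col_index)) l = bij_of_perm s l"
    by (simp add: bij_of_perm_def)
  ultimately have "bij_betw (bij_of_perm s) Bm Bm1" using bij_betw_cong by blast
  then show ?thesis by (simp add: bijections_def bij_of_perm_def)
qed

lemma inj_on_bij_of_perm: "inj_on bij_of_perm perms"
proof (rule inj_onI)
  fix s t assume s: "s \<in> perms" and t: "t \<in> perms" and eq: "bij_of_perm s = bij_of_perm t"
  have sp: "s permutes {0..<dim_B}" and tp: "t permutes {0..<dim_B}" using s t by auto
  have si: "Hilbert_Choice.inv s permutes {0..<dim_B}"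
    and ti: "Hilbert_Choice.inv t permutes {0..<dim_B}"
    using sp tp by (auto intro: permutes_inv)
  have "Hilbert_Choice.inv s k = Hilbert_Choice.inv t k" for k
  proof (cases "k < dim_B")
    case True
    have k_col: "col_monoms ! k \<in> Bm"
      using bij_betw_nth_col_monoms True by (auto simp: bij_betw_def)
    have "bij_of_perm s (col_monoms ! k) = bij_of_perm t (col_monoms ! k)" using eq by simp
    then have "row_monoms ! Hilbert_Choice.inv s k = row_monoms ! Hilbert_Choice.inv t k"
      using k_col col_index_nth_col_monoms[OF True] by (simp add: bij_of_perm_def)
    moreover have "Hilbert_Choice.inv s k < dim_B" "Hilbert_Choice.inv t k < dim_B"
      using permutes_in_image[OF si] permutes_in_image[OF ti] True by auto
    ultimately show ?thesis using bij_betw_nth_row_monoms by (auto simp: bij_betw_def dest: inj_onD)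
  next
    case False
    then show ?thesis using permutes_not_in[OF si] permutes_not_in[OF ti] by simp
  qed
  then have "Hilbert_Choice.inv s = Hilbert_Choice.inv t" by blast
  then show "s = t" using permutes_inv_inv[OF sp] permutes_inv_inv[OF tp] by metis
qed

lemma bij_of_perm_surj: "\<exists>s\<in>perms. bij_of_perm s = f" if f: "f \<in> bijections"
proof -
  have fb: "bij_betw f Bm Bm1" and fo: "\<And>x. x \<notin> Bm \<Longrightarrow> f x = undefined"
    using f by (auto simp: bijections_def)
  define tau where "tau k = (if k < dim_B then row_index (f (col_monoms ! k)) else k)" for k
  have "bij_betw (row_index \<circ> (f \<circ> nth col_monoms)) {..<dim_B} {..<dim_B}"
    by (rule bij_betw_trans[OF bij_betw_trans[OF bij_betw_nth_col_monoms fb] bij_betw_row_index])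
  moreover have "\<And>k. k \<in> {..<dim_B} \<Longrightarrow> (row_index \<circ> (f \<circ> nth col_monoms)) k = tau k"
    by (simp add: tau_def)
  ultimately have "bij_betw tau {..<dim_B} {..<dim_B}" using bij_betw_cong by blast
  then have tau: "tau permutes {0..<dim_B}"
    by (intro bij_imp_permutes) (auto simp: tau_def atLeast0LessThan)
  have "bij_of_perm (Hilbert_Choice.inv tau) l = f l" for l
  proof (cases "l \<in> Bm")
    case True
    then have "bij_of_perm (Hilbert_Choice.inv tau) l = row_monoms ! row_index (f l)"
      using col_index_less[OF True] col_monoms_nth_col_index[OF True]
      by (simp add: bij_of_perm_def permutes_inv_inv[OF tau] tau_def)
    also have "\<dots> = f l" using fb True by (intro row_monoms_nth_row_index) (auto simp: bij_betw_def)
    finally show ?thesis .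
  qed (simp add: bij_of_perm_def fo)
  moreover have "Hilbert_Choice.inv tau \<in> perms" using tau by (simp add: permutes_inv)
  ultimately show ?thesis by blast
qed

lemma bij_betw_bij_of_perm: "bij_betw bij_of_perm perms bijections"
  unfolding bij_betw_def
  using inj_on_bij_of_perm bij_of_perm_mem_bijections bij_of_perm_surj by blast

lemma prod_U_entry_eq_perm_term:
  assumes s: "s \<in> perms"
  shows "(\<Prod>i=0..<dim_B. U_entry (row_monoms ! i) (col_monoms ! s i)) = perm_term (bij_of_perm s)"
proof -
  let ?h = "\<lambda>i. col_monoms ! s i"
  have "bij_betw (nth col_monoms \<circ> s) {..<dim_B} Bm"
    by (rule bij_betw_trans[OF bij_betw_permutes[OF s] bij_betw_nth_col_monoms])
  then have "bij_betw ?h {0..<dim_B} Bm" by (simp add: atLeast0LessThan comp_def)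
  then have "(\<Prod>i=0..<dim_B. U_entry (bij_of_perm s (?h i)) (?h i)) = perm_term (bij_of_perm s)"
    unfolding perm_term_def by (rule prod.reindex_bij_betw)
  moreover have "bij_of_perm s (?h i) = row_monoms ! i" if "i \<in> {0..<dim_B}" for i
  proof -
    have "s i < dim_B" using permutes_in_image s that by simp
    then have "?h i \<in> Bm" "col_index (?h i) = s i"
      using bij_betw_nth_col_monoms col_index_nth_col_monoms by (auto simp: bij_betw_def)
    then show ?thesis using permutes_inverses(2) s by (simp add: bij_of_perm_def)
  qed
  ultimately show ?thesis by (metis (no_types, lifting) prod.cong)
qed

lemma card_inversions_bij_of_perm:
  assumes s: "s \<in> perms"
  shows "card (inversions (bij_of_perm s)) = card (perm_inversions (Hilbert_Choice.inv s) dim_B)"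
proof -
  let ?r = "Hilbert_Choice.inv s"
  let ?g = "\<lambda>(x, y). (col_monoms ! x, col_monoms ! y)"
  have r_less: "k < dim_B \<Longrightarrow> ?r k < dim_B" for k
    using permutes_in_image[OF permutes_inv] s by simp
  have col_monoms_mem: "k < dim_B \<Longrightarrow> col_monoms ! k \<in> Bm" for k
    using bij_betw_nth_col_monoms by (auto simp: bij_betw_def)
  have key: "(col_monoms ! x, col_monoms ! y) \<in> inversions (bij_of_perm s)
      \<longleftrightarrow> (x, y) \<in> perm_inversions ?r dim_B"
    if "x < dim_B" "y < dim_B" for x y
    using that col_monoms_mem r_less col_monoms_nth_less_iff[OF that]
      row_monoms_nth_less_iff[OF r_less r_less, of y x]
    by (auto simp: inversions_def perm_inversions_def bij_of_perm_def col_index_nth_col_monoms)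
  have "inversions (bij_of_perm s) = ?g ` perm_inversions ?r dim_B"
  proof
    show "inversions (bij_of_perm s) \<subseteq> ?g ` perm_inversions ?r dim_B"
    proof
      fix z assume z: "z \<in> inversions (bij_of_perm s)"
      then obtain l l' where ll': "z = (l, l')" "l \<in> Bm" "l' \<in> Bm" by (auto simp: inversions_def)
      then have "(col_index l, col_index l') \<in> perm_inversions ?r dim_B"
        using key[of "col_index l" "col_index l'"] z col_index_less col_monoms_nth_col_index by simp
      then show "z \<in> ?g ` perm_inversions ?r dim_B"
        using ll'(1) col_monoms_nth_col_index[OF ll'(2)] col_monoms_nth_col_index[OF ll'(3)]
        by (auto intro!: image_eqI[where x = "(col_index l, col_index l')"])
    qed
    show "?g ` perm_inversions ?r dim_B \<subseteq> inversions (bij_of_perm s)"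
      using key by (auto simp: perm_inversions_def)
  qed
  moreover have "inj_on ?g (perm_inversions ?r dim_B)"
    using bij_betw_nth_col_monoms by (auto simp: inj_on_def bij_betw_def perm_inversions_def)
  ultimately show ?thesis by (simp add: card_image)
qed

text \<open>Both bases are listed in increasing order, so the inversions of the matching are those
  of the permutation.\<close>

lemma sign_eq_if_matching:
  assumes s: "s \<in> perms" and M: "bij_of_perm s \<in> matchings"
  shows "sign s = (-1) ^ nat inversion_count"
proof -
  interpret M: matching a b c "bij_of_perm s" by (rule matching_if_mem_matchings[OF M])
  have "Hilbert_Choice.inv s permutes {..<dim_B}"
    using permutes_inv s by (simp add: atLeast0LessThan)
  moreover have "sign s = sign (Hilbert_Choice.inv s)"
    using s by (simp add: sign_inverse permutes_imp_permutation[of "{0..<dim_B}"])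
  ultimately have "sign s = (-1) ^ card (perm_inversions (Hilbert_Choice.inv s) dim_B)"
    by (simp add: sign_eq_perm_inversions)
  also have "card (perm_inversions (Hilbert_Choice.inv s) dim_B) = nat inversion_count"
    using card_inversions_bij_of_perm[OF s] M.card_inversions by simp
  finally show ?thesis .
qed

lemma det_U_mat_eq: "det (U_mat a b c) = (-1) ^ nat inversion_count * int (card matchings)"
proof -
  define G where "G f = (if f \<in> matchings then (-1) ^ nat inversion_count else (0::int))" for f
  have "of_int (sign s) * perm_term (bij_of_perm s) = G (bij_of_perm s)" if "s \<in> perms" for s
    using perm_term_eq[OF bij_of_perm_mem_bijections[OF that]] sign_eq_if_matching[OF that]
    by (simp add: G_def)
  then have "det (U_mat a b c) = (\<Sum>s\<in>perms. G (bij_of_perm s))"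
    unfolding det_U_mat_eq_sum by (intro sum.cong refl) (simp add: prod_U_entry_eq_perm_term)
  also have "\<dots> = (\<Sum>f\<in>bijections. G f)" using bij_betw_bij_of_perm by (rule sum.reindex_bij_betw)
  also have "\<dots> = (\<Sum>f\<in>bijections \<inter> matchings. (-1) ^ nat inversion_count)"
    unfolding G_def using finite_bijections by (simp add: sum.If_cases)
  also have "bijections \<inter> matchings = matchings" using matchings_subset_bijections by blast
  finally show ?thesis by simp
qed

end

theorem theorem2:
  fixes a b c :: nat
  assumes "0 < a" and "0 < b" and "0 < c"
  defines "m \<equiv> a + b + c - 2"
  shows "card (basis_B a b c m) = card (basis_B a b c (m+1))
     \<and> (det (U_mat a b c) = U_perm a b c \<or> det (U_mat a b c) = - U_perm a b c)
     \<and> (\<forall>phi. bij_betw phi (basis_B a b c m) (basis_B a b c (m+1)) \<longrightarrow>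
          ((\<Prod>lam \<in> basis_B a b c m. U_entry (phi lam) lam) \<noteq> 0
            \<longleftrightarrow> (\<forall>lam \<in> basis_B a b c m. step_monom (phi lam) lam)))
     \<and> (\<exists>F. bij_betw F
          {phi. bij_betw phi (basis_B a b c m) (basis_B a b c (m+1))
                \<and> (\<forall>x. x \<notin> basis_B a b c m \<longrightarrow> phi x = undefined)
                \<and> (\<forall>lam \<in> basis_B a b c m. step_monom (phi lam) lam)}
          (box_PP a b c))
     \<and> \<bar>det (U_mat a b c)\<bar> = int (card (box_PP a b c))"
proof -
  have B: "box a b c" using assms by (simp add: box_def)
  have Bm: "basis_B a b c m = box.Bm a b c" and Bm1: "basis_B a b c (m + 1) = box.Bm1 a b c"
    by (simp_all add: box.Bm_def[OF B] box.Bm1_def[OF B] box.m_def[OF B] m_def)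
  have matchings: "{phi. bij_betw phi (box.Bm a b c) (box.Bm1 a b c)
      \<and> (\<forall>x. x \<notin> box.Bm a b c \<longrightarrow> phi x = undefined)
      \<and> (\<forall>lam \<in> box.Bm a b c. step_monom (phi lam) lam)} = box.matchings a b c"
    by (simp add: box.matchings_def[OF B])
  have card_pp: "card (box.matchings a b c) = card (box_PP a b c)"
    using box.bij_betw_pp_of_matching[OF B] by (rule bij_betw_same_card)
  show ?thesis
    unfolding Bm Bm1 matchings box.det_U_mat_eq[OF B] box.U_perm_eq_card_matchings[OF B] card_pp
  proof (intro conjI allI impI)
    show "card (box.Bm a b c) = card (box.Bm1 a b c)" by (rule box.card_Bm_eq_card_Bm1[OF B])
    show "\<exists>F. bij_betw F (box.matchings a b c) (box_PP a b c)"
      using box.bij_betw_pp_of_matching[OF B] by blast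
  qed (auto simp: prod_U_entry_eq box.finite_Bm[OF B] minus_one_power_iff)
qed

end
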